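(* Let $\Sigma=(\mathcal X,\mathcal Y,M_U,M_D,\phi,\pi,H)$ be a control system with outputs which has the BIC property, for which $0\in\mathcal X$ is a robust equilibrium point from the input $u\in M_U$, and which is RFC from the input $u\in M_U$. Suppose there exist a function $V:\mathbb R^+\times\mathcal X\times U\to\mathbb R^+$ with $V(t,0,0)=0$ for all $t\ge0$, and functions $\gamma\in\mathcal N$, $\delta\in K^+$ such that, writing $W(t,t_0,x_0,u,d):=V(t,\phi(t,t_0,x_0,u,d),u(t))-\sup_{t_0\le\tau\le t}\gamma(\delta(\tau)\|u(\tau)\|_{\mathcal U})$: (P1) for every $s\ge0$, $T\ge0$: $\sup\{W(t,t_0,x_0,u,d): t\ge t_0,\ \|x_0\|_{\mathcal X}\le s,\ t_0\in[0,T],\ d\in M_D,\ u\in M_U\}<+\infty$; (P2) for every $\varepsilon>0$ and $T\ge0$ there exists $\eta=\eta(\varepsilon,T)>0$ such that $\sup\{W(t,t_0,x_0,u,d): t\ge t_0,\ \|x_0\|_{\mathcal X}\le\eta,\ t_0\in[0,T],\ d\in M_D,\ u\in M_U\}\le\varepsilon$; (P3) for every $\varepsilon>0$, $T\ge0$, $R\ge0$ there exists $\tau=\tau(\varepsilon,T,R)\ge0$ such that $\sup\{W(t,t_0,x_0,u,d): t\ge t_0+\tau,\ \|x_0\|_{\mathcal X}\le R,\ t_0\in[0,T],\ d\in M_D,\ u\in M_U\}\le\varepsilon$. Then there exist $\sigma\in KL$ and $\beta\in K^+$ such that for all $u\in M_U$, $(t_0,x_0,d)\in\mathbb R^+\times\mathcal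 X\times M_D$ and $t\ge t_0$: $$V(t,\phi(t,t_0,x_0,u,d),u(t))\le\sigma(\beta(t_0)\|x_0\|_{\mathcal X},t-t_0)+\sup_{t_0\le\tau\le t}\gamma(\delta(\tau)\|u(\tau)\|_{\mathcal U}).$$ Moreover, if there exists $a\in\mathcal N$ with $\|H(t,x,u)\|_{\mathcal Y}\le a(V(t,x,u))$ for all $(t,x,u)\in\mathbb R^+\times\mathcal X\times U$, then for every $\rho\in K_\infty$, $\Sigma$ satisfies the WIOS property from the input $u\in M_U$ with gain $\tilde\gamma\in\mathcal N$ and weight $\delta$, where $\tilde\gamma(s):=a(\gamma(s)+\rho(\gamma(s)))$.
   Context: Notation: $\mathbb R^+=[0,\infty)$. $K^+$: positive continuous functions on $\mathbb R^+$. $\mathcal N$: continuous non-decreasing $\rho:\mathbb R^+\to\mathbb R^+$ with $\rho(0)=0$. $K$: positive definite, increasing, continuous functions $\mathbb R^+\to\mathbb R^+$; $K_\infty$: those of class $K$ that are unbounded. $KL$: continuous $\sigma:\mathbb R^+\times\mathbb R^+\to\mathbb R^+$ with $\sigma(\cdot,t)\in K$ for each $t\ge0$ and $\sigma(s,\cdot)$ non-increasing with $\lim_{t\to\infty}\sigma(s,t)=0$ for each $s$. For a subset $U$ of a normed linear space $\mathcal U$ with $0\in U$, $\mathcal M(U)$ denotes the set of locally bounded functions $u:\mathbb R^+\to U$, $u_0$ the identically zero input, $B_U[0,r]=\{v\in U:\|v\|_{\mathcal U}\le r\}$. Control system with outputs $\Sigma=(\mathcal X,\mathcal Y,M_U,M_D,\phi,\pi,H)$: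 a set $U\subseteq\mathcal U$ ($0\in U$) and $M_U\subseteq\mathcal M(U)$ containing $u_0$; a set $D$ and $M_D\subseteq\mathcal M(D)$; normed linear spaces $\mathcal X,\mathcal Y$; a continuous $H:\mathbb R^+\times\mathcal X\times U\to\mathcal Y$ mapping bounded sets into bounded sets; a set-valued map $(t_0,x_0,u,d)\mapsto\pi(t_0,x_0,u,d)\subseteq[t_0,\infty)$ with $t_0\in\pi(t_0,x_0,u,d)$; a map $\phi:A_\phi\to\mathcal X$, $A_\phi\subseteq\mathbb R^+\times\mathbb R^+\times\mathcal X\times M_U\times M_D$, satisfying: (1) for each $(t_0,x_0,u,d)$ some $t>t_0$ has $[t_0,t]\times\{(t_0,x_0,u,d)\}\subseteq A_\phi$; (2) $\phi(t_0,t_0,x_0,u,d)=x_0$; (3) causality: if $(t,t_0,x_0,u,d)\in A_\phi$, $t>t_0$, and $(\tilde u,\tilde d)\in M_U\times M_D$ agrees with $(u,d)$ on $[t_0,t]$, then $(t,t_0,x_0,\tilde u,\tilde d)\in A_\phi$ and $\phi(t,t_0,x_0,u,d)=\phi(t,t_0,x_0,\tilde u,\tilde d)$; (4) weak semigroup property: there is $r>0$ such that for each $t\ge t_0$ with $(t,t_0,x_0,u,d)\in A_\phi$: (a) $(\tau,t_0,x_0,u,d)\in A_\phi$ for $\tau\in[t_0,t]$; (b) $\phi(t,\tau,\phi(\tau,t_0,x_0,u,d),u,d)=\phi(t,t_0,x_0,u,d)$ for $\tau\in[t_0,t]\cap\pi(t_0,x_0,u,d)$; (c) if $(t+r,t_0,x_0,u,d)\in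 A_\phi$ then $\pi(t_0,x_0,u,d)\cap[t,t+r]\ne\emptyset$; (d) for $\tau\in\pi(t_0,x_0,u,d)$ with $(\tau,t_0,x_0,u,d)\in A_\phi$, $\pi(\tau,\phi(\tau,t_0,x_0,u,d),u,d)=\pi(t_0,x_0,u,d)\cap[\tau,\infty)$. BIC property: for each $(t_0,x_0,u,d)$ there is $t_{\max}\in(t_0,+\infty]$ with $A_\phi=\bigcup[t_0,t_{\max})\times\{(t_0,x_0,u,d)\}$, and if $t_{\max}<\infty$ then $\phi(\cdot,t_0,x_0,u,d)$ is unbounded in norm on $[t_0,t_{\max})$. RFC from the input $u\in M_U$: BIC and for all $r,T\ge0$, $\sup\{\|\phi(t_0+s,t_0,x_0,u,d)\|_{\mathcal X}: u\in\mathcal M(B_U[0,r])\cap M_U, s\in[0,T],\|x_0\|_{\mathcal X}\le r,t_0\in[0,T],d\in M_D\}<\infty$. Robust equilibrium point from the input $u\in M_U$: $H(t,0,0)=0$ for all $t\ge0$; (i) $\phi(t,t_0,0,u_0,d)=0$ for all $t\ge t_0\ge0$, $d\in M_D$; (ii) for every $\varepsilon>0$, $T,h\ge0$ there is $\eta>0$ such that for all $t_0\in[0,T]$, $x\in\mathcal X$, $u\in M_U$ with $\|x\|_{\mathcal X}+\sup_{t\ge0}\|u(t)\|_{\mathcal U}<\eta$, all $\tau\in[t_0,t_0+h]$ and $d\in M_D$: $(\tau,t_0,x,u,d)\in A_\phi$ and $\|\phi(\tau,t_0,x,u,d)\|_{\mathcal X}<\varepsilon$. WIOS: for $\Sigma$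 with BIC, RFC from $u$, and $0$ a robust equilibrium point from $u$, $\Sigma$ satisfies the Weighted Input-to-Output Stability (WIOS) property from the input $u\in M_U$ with gain $\gamma\in\mathcal N$ and weight $\delta\in K^+$ if there exist $\sigma\in KL$, $\beta\in K^+$ such that for all $u\in M_U$, $(t_0,x_0,d)\in\mathbb R^+\times\mathcal X\times M_D$, $t\ge t_0$: $\|H(t,\phi(t,t_0,x_0,u,d),u(t))\|_{\mathcal Y}\le\sigma(\beta(t_0)\|x_0\|_{\mathcal X},t-t_0)+\sup_{t_0\le\tau\le t}\gamma(\delta(\tau)\|u(\tau)\|_{\mathcal U})$. *)

theory Defs
  imports "HOL-Analysis.Analysis"
begin

definition classKplus :: "(real \<Rightarrow> real) \<Rightarrow> bool" where
  "classKplus f \<longleftrightarrow> continuous_on {0..} f \<and> (\<forall>t\<ge>0. f t > 0)"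

definition classN :: "(real \<Rightarrow> real) \<Rightarrow> bool" where
  "classN \<rho> \<longleftrightarrow> continuous_on {0..} \<rho> \<and> mono_on {0..} \<rho> \<and> \<rho> 0 = 0
     \<and> (\<forall>s\<ge>0. \<rho> s \<ge> 0)"

definition classK :: "(real \<Rightarrow> real) \<Rightarrow> bool" where
  "classK \<rho> \<longleftrightarrow> continuous_on {0..} \<rho> \<and> strict_mono_on {0..} \<rho> \<and> \<rho> 0 = 0
     \<and> (\<forall>s>0. \<rho> s > 0)"

definition classKinf :: "(real \<Rightarrow> real) \<Rightarrow> bool" where
  "classKinf \<rho> \<longleftrightarrow> classK \<rho> \<and> \<not> bdd_above (\<rho> ` {0..})"

definition classKL :: "(real \<Rightarrow> real \<Rightarrow> real) \<Rightarrow> bool" where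
  "classKL \<sigma> \<longleftrightarrow> continuous_on ({0..} \<times> {0..}) (\<lambda>(s,t). \<sigma> s t)
     \<and> (\<forall>t\<ge>0. classK (\<lambda>s. \<sigma> s t))
     \<and> (\<forall>s\<ge>0. antimono_on {0..} (\<sigma> s) \<and> ((\<sigma> s) \<longlongrightarrow> 0) at_top)"

text \<open>M(U): locally bounded functions R+ -> U (values at negative times are irrelevant).\<close>
definition locbdd_fun :: "'u::real_normed_vector set \<Rightarrow> (real \<Rightarrow> 'u) set" where
  "locbdd_fun U = {u. (\<forall>t\<ge>0. u t \<in> U) \<and> (\<forall>T\<ge>0. bounded (u ` {0..T}))}"

definition fun_into :: "'d set \<Rightarrow> (real \<Rightarrow> 'd) set" where
  "fun_into D = {d. \<forall>t\<ge>0. d t \<in> D}"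

definition zero_input :: "real \<Rightarrow> 'u::zero" where
  "zero_input = (\<lambda>t. 0)"

text \<open>Tuples in A_phi are (t, t0, x0, u, d); phi t t0 x0 u d; pi t0 x0 u d.\<close>

definition control_system ::
  "'u::real_normed_vector set \<Rightarrow> (real \<Rightarrow> 'u) set \<Rightarrow> 'd set \<Rightarrow> (real \<Rightarrow> 'd) set
   \<Rightarrow> (real \<Rightarrow> real \<Rightarrow> 'x::real_normed_vector \<Rightarrow> (real \<Rightarrow> 'u) \<Rightarrow> (real \<Rightarrow> 'd) \<Rightarrow> 'x)
   \<Rightarrow> (real \<times> real \<times> 'x \<times> (real \<Rightarrow> 'u) \<times> (real \<Rightarrow> 'd)) set
   \<Rightarrow> (real \<Rightarrow> 'x \<Rightarrow> (real \<Rightarrow> 'u) \<Rightarrow> (real \<Rightarrow> 'd) \<Rightarrow> real set)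
   \<Rightarrow> (real \<Rightarrow> 'x \<Rightarrow> 'u \<Rightarrow> 'y::real_normed_vector) \<Rightarrow> bool" where
  "control_system U MU D MD \<phi> A\<phi> \<pi> H \<longleftrightarrow>
     0 \<in> U \<and> MU \<subseteq> locbdd_fun U \<and> zero_input \<in> MU \<and> MD \<subseteq> fun_into D
   \<and> continuous_on ({0..} \<times> UNIV \<times> U) (\<lambda>(t,x,v). H t x v)
   \<and> (\<forall>S. S \<subseteq> {0..} \<times> UNIV \<times> U \<and> bounded S \<longrightarrow> bounded ((\<lambda>(t,x,v). H t x v) ` S))
   \<and> A\<phi> \<subseteq> {(t,t0,x0,u,d). t \<ge> 0 \<and> t0 \<ge> 0 \<and> u \<in> MU \<and> d \<in> MD}
   \<and> (\<forall>t0\<ge>0. \<forall>x0. \<forall>u\<in>MU. \<forall>d\<in>MD.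
        \<pi> t0 x0 u d \<subseteq> {t0..} \<and> t0 \<in> \<pi> t0 x0 u d
      \<and> (\<exists>t>t0. \<forall>s\<in>{t0..t}. (s,t0,x0,u,d) \<in> A\<phi>)
      \<and> \<phi> t0 t0 x0 u d = x0)
   \<and> (\<forall>t t0 x0 u d u' d'. (t,t0,x0,u,d) \<in> A\<phi> \<and> t > t0 \<and> u' \<in> MU \<and> d' \<in> MD
        \<and> (\<forall>s\<in>{t0..t}. u' s = u s \<and> d' s = d s)
        \<longrightarrow> (t,t0,x0,u',d') \<in> A\<phi> \<and> \<phi> t t0 x0 u d = \<phi> t t0 x0 u' d')
   \<and> (\<exists>r>0. \<forall>t0\<ge>0. \<forall>x0. \<forall>u\<in>MU. \<forall>d\<in>MD. \<forall>t\<ge>t0. (t,t0,x0,u,d) \<in> A\<phi> \<longrightarrow>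
        (\<forall>\<tau>\<in>{t0..t}. (\<tau>,t0,x0,u,d) \<in> A\<phi>)
      \<and> (\<forall>\<tau>\<in>{t0..t} \<inter> \<pi> t0 x0 u d. \<phi> t \<tau> (\<phi> \<tau> t0 x0 u d) u d = \<phi> t t0 x0 u d)
      \<and> ((t + r,t0,x0,u,d) \<in> A\<phi> \<longrightarrow> \<pi> t0 x0 u d \<inter> {t..t+r} \<noteq> {})
      \<and> (\<forall>\<tau>\<in>\<pi> t0 x0 u d. (\<tau>,t0,x0,u,d) \<in> A\<phi> \<longrightarrow>
            \<pi> \<tau> (\<phi> \<tau> t0 x0 u d) u d = \<pi> t0 x0 u d \<inter> {\<tau>..}))"

definition BIC :: "(real \<Rightarrow> 'u) set \<Rightarrow> (real \<Rightarrow> 'd) set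
   \<Rightarrow> (real \<Rightarrow> real \<Rightarrow> 'x::real_normed_vector \<Rightarrow> (real \<Rightarrow> 'u) \<Rightarrow> (real \<Rightarrow> 'd) \<Rightarrow> 'x)
   \<Rightarrow> (real \<times> real \<times> 'x \<times> (real \<Rightarrow> 'u) \<times> (real \<Rightarrow> 'd)) set \<Rightarrow> bool" where
  "BIC MU MD \<phi> A\<phi> \<longleftrightarrow>
     (\<forall>t0\<ge>0. \<forall>x0. \<forall>u\<in>MU. \<forall>d\<in>MD.
        (\<forall>t. (t,t0,x0,u,d) \<in> A\<phi> \<longleftrightarrow> t0 \<le> t)
      \<or> (\<exists>tmax>t0. (\<forall>t. (t,t0,x0,u,d) \<in> A\<phi> \<longleftrightarrow> t0 \<le> t \<and> t < tmax)
            \<and> \<not> bounded ((\<lambda>t. \<phi> t t0 x0 u d) ` {t0..<tmax})))"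

definition RFC :: "'u::real_normed_vector set \<Rightarrow> (real \<Rightarrow> 'u) set \<Rightarrow> (real \<Rightarrow> 'd) set
   \<Rightarrow> (real \<Rightarrow> real \<Rightarrow> 'x::real_normed_vector \<Rightarrow> (real \<Rightarrow> 'u) \<Rightarrow> (real \<Rightarrow> 'd) \<Rightarrow> 'x)
   \<Rightarrow> (real \<times> real \<times> 'x \<times> (real \<Rightarrow> 'u) \<times> (real \<Rightarrow> 'd)) set \<Rightarrow> bool" where
  "RFC U MU MD \<phi> A\<phi> \<longleftrightarrow> BIC MU MD \<phi> A\<phi> \<and>
     (\<forall>r\<ge>0. \<forall>T\<ge>0. bdd_above
        {norm (\<phi> (t0 + s) t0 x0 u d) | s t0 x0 u d.
           u \<in> locbdd_fun (U \<inter> cball 0 r) \<inter> MU \<and> s \<in> {0..T} \<and> norm x0 \<le> r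
           \<and> t0 \<in> {0..T} \<and> d \<in> MD \<and> (t0 + s,t0,x0,u,d) \<in> A\<phi>})"

definition robust_equilibrium :: "(real \<Rightarrow> 'u::real_normed_vector) set \<Rightarrow> (real \<Rightarrow> 'd) set
   \<Rightarrow> (real \<Rightarrow> real \<Rightarrow> 'x::real_normed_vector \<Rightarrow> (real \<Rightarrow> 'u) \<Rightarrow> (real \<Rightarrow> 'd) \<Rightarrow> 'x)
   \<Rightarrow> (real \<times> real \<times> 'x \<times> (real \<Rightarrow> 'u) \<times> (real \<Rightarrow> 'd)) set
   \<Rightarrow> (real \<Rightarrow> 'x \<Rightarrow> 'u \<Rightarrow> 'y::real_normed_vector) \<Rightarrow> bool" where
  "robust_equilibrium MU MD \<phi> A\<phi> H \<longleftrightarrow>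
     (\<forall>t\<ge>0. H t 0 0 = 0)
   \<and> (\<forall>t0\<ge>0. \<forall>t\<ge>t0. \<forall>d\<in>MD. (t,t0,0,zero_input,d) \<in> A\<phi> \<and> \<phi> t t0 0 zero_input d = 0)
   \<and> (\<forall>\<epsilon>>0. \<forall>T\<ge>0. \<forall>h\<ge>0. \<exists>\<eta>>0. \<forall>t0\<in>{0..T}. \<forall>x. \<forall>u\<in>MU.
        bdd_above ((\<lambda>t. norm (u t)) ` {0..}) \<and> norm x + (SUP t\<in>{0..}. norm (u t)) < \<eta>
        \<longrightarrow> (\<forall>\<tau>\<in>{t0..t0+h}. \<forall>d\<in>MD. (\<tau>,t0,x,u,d) \<in> A\<phi> \<and> norm (\<phi> \<tau> t0 x u d) < \<epsilon>))"

text \<open>Weighted Input-to-Output Stability (the estimate is required wherever the solution is defined).\<close>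
definition WIOS :: "'u::real_normed_vector set \<Rightarrow> (real \<Rightarrow> 'u) set \<Rightarrow> (real \<Rightarrow> 'd) set
   \<Rightarrow> (real \<Rightarrow> real \<Rightarrow> 'x::real_normed_vector \<Rightarrow> (real \<Rightarrow> 'u) \<Rightarrow> (real \<Rightarrow> 'd) \<Rightarrow> 'x)
   \<Rightarrow> (real \<times> real \<times> 'x \<times> (real \<Rightarrow> 'u) \<times> (real \<Rightarrow> 'd)) set
   \<Rightarrow> (real \<Rightarrow> 'x \<Rightarrow> 'u \<Rightarrow> 'y::real_normed_vector)
   \<Rightarrow> (real \<Rightarrow> real) \<Rightarrow> (real \<Rightarrow> real) \<Rightarrow> bool" where
  "WIOS U MU MD \<phi> A\<phi> H \<gamma> \<delta> \<longleftrightarrow>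
     BIC MU MD \<phi> A\<phi> \<and> RFC U MU MD \<phi> A\<phi> \<and> robust_equilibrium MU MD \<phi> A\<phi> H
   \<and> classN \<gamma> \<and> classKplus \<delta>
   \<and> (\<exists>\<sigma> \<beta>. classKL \<sigma> \<and> classKplus \<beta> \<and>
        (\<forall>u\<in>MU. \<forall>t0\<ge>0. \<forall>x0. \<forall>d\<in>MD. \<forall>t\<ge>t0. (t,t0,x0,u,d) \<in> A\<phi> \<longrightarrow>
           norm (H t (\<phi> t t0 x0 u d) (u t))
             \<le> \<sigma> (\<beta> t0 * norm x0) (t - t0) + (SUP \<tau>\<in>{t0..t}. \<gamma> (\<delta> \<tau> * norm (u \<tau>)))))"

end

(* Write W for V minus the supremum of the weighted input gain. P1-P3 say that W is bounded,
   small for small initial states and eventually small, but only uniformly over bounded sets of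
   initial times t0. A weight beta(t0) growing fast enough in t0 turns the t0-dependent smallness
   of P2 into smallness in the single quantity r = beta(t0) |x0|. The three properties then yield a
   class-K majorant kappa(r) and a decay profile mu(h - theta(r)) in the elapsed time h, and
   min (kappa(r), mu(h - theta(r))) + r exp(-h) is a KL bound for W.
   For the output estimate, if kappa' is a continuous majorant of the inverse of rho, then
   a(p + g) <= a(p + kappa'(p)) + a(g + rho(g)); this separates a KL term from the input term, and
   the supremum over tau commutes with the continuous nondecreasing function a(. + rho(.)). *)

theory Submission
  imports Defs
begin

lemma classN_nonneg: "classN f \<Longrightarrow> 0 \<le> s \<Longrightarrow> 0 \<le> f s"
  by (simp add: classN_def)

lemma classN_mono:
  assumes "classN f" "0 \<le> s" "s \<le> s'"
  shows "f s \<le> f s'"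
proof (rule mono_onD[of "{0..}" f])
  show "mono_on {0..} f" using assms(1) by (simp add: classN_def)
qed (use assms in auto)

lemma classK_nonneg:
  assumes "classK f" "0 \<le> s"
  shows "0 \<le> f s"
proof (cases "s = 0")
  case False
  then show ?thesis using assms by (simp add: classK_def less_imp_le)
qed (use assms in \<open>simp add: classK_def\<close>)

lemma classK_imp_classN:
  assumes "classK f"
  shows "classN f"
proof -
  have "continuous_on {0..} f" "strict_mono_on {0..} f" "f 0 = 0"
    using assms by (simp_all add: classK_def)
  then show ?thesis
    unfolding classN_def using classK_nonneg[OF assms] by (simp add: strict_mono_on_imp_mono_on)
qed

lemma classN_id: "classN (\<lambda>s. s)"
  unfolding classN_def by (simp add: continuous_on_id mono_on_ident)

lemma classN_add:
  assumes f: "classN f" and g: "classN g"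
  shows "classN (\<lambda>s. f s + g s)"
proof -
  have "continuous_on {0..} (\<lambda>s. f s + g s)"
    using f g by (intro continuous_on_add) (simp_all add: classN_def)
  moreover have "mono_on {0..} (\<lambda>s. f s + g s)"
    by (rule mono_onI) (simp add: add_mono classN_mono[OF f] classN_mono[OF g])
  ultimately show ?thesis
    using f g classN_nonneg[OF f] classN_nonneg[OF g] by (simp add: classN_def)
qed

lemma classN_comp:
  assumes f: "classN f" and g: "classN g"
  shows "classN (\<lambda>s. f (g s))"
proof -
  have "continuous_on {0..} (\<lambda>s. f (g s))"
  proof (rule continuous_on_compose2[of "{0..}" f "{0..}" g])
    show "continuous_on {0..} f" "continuous_on {0..} g" using f g by (simp_all add: classN_def)
  qed (use classN_nonneg[OF g] in auto)
  moreover have "mono_on {0..} (\<lambda>s. f (g s))"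
    by (rule mono_onI) (simp add: classN_mono[OF f] classN_mono[OF g] classN_nonneg[OF g])
  ultimately show ?thesis
    using f g classN_nonneg[OF f] classN_nonneg[OF g] by (simp add: classN_def)
qed

lemma classKL_nonneg:
  assumes "classKL \<sigma>" "0 \<le> s" "0 \<le> t"
  shows "0 \<le> \<sigma> s t"
proof -
  have "classK (\<lambda>s. \<sigma> s t)" using assms(1,3) by (simp add: classKL_def)
  then show ?thesis using assms(2) by (rule classK_nonneg)
qed

lemma continuous_on_classN_comp:
  assumes "classN F" "continuous_on A f" "\<And>x. x \<in> A \<Longrightarrow> 0 \<le> f x"
  shows "continuous_on A (\<lambda>x. F (f x))"
proof (rule continuous_on_compose2[of "{0..}" F A f])
  show "continuous_on {0..} F" using assms(1) by (simp add: classN_def)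
qed (use assms in auto)

lemma classKL_add_comp:
  assumes \<sigma>: "classKL \<sigma>" and F: "classN F"
  shows "classKL (\<lambda>s t. F (\<sigma> s t) + \<sigma> s t)"
  unfolding classKL_def
proof (intro conjI allI impI)
  have \<sigma>_cont: "continuous_on ({0..} \<times> {0..}) (\<lambda>(s, t). \<sigma> s t)" using \<sigma> by (simp add: classKL_def)
  have "continuous_on ({0..} \<times> {0..}) (\<lambda>p. F ((\<lambda>(s, t). \<sigma> s t) p) + (\<lambda>(s, t). \<sigma> s t) p)"
  proof (intro continuous_on_add \<sigma>_cont continuous_on_classN_comp[OF F \<sigma>_cont])
    show "0 \<le> (\<lambda>(s, t). \<sigma> s t) p" if "p \<in> {0..} \<times> {0..}" for p
      using that classKL_nonneg[OF \<sigma>] by (auto simp: case_prod_beta)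
  qed
  then show "continuous_on ({0..} \<times> {0..}) (\<lambda>(s, t). F (\<sigma> s t) + \<sigma> s t)"
    by (simp add: case_prod_beta)
next
  fix t :: real assume "0 \<le> t"
  then have "classK (\<lambda>s. \<sigma> s t)" using \<sigma> by (simp add: classKL_def)
  then have cont: "continuous_on {0..} (\<lambda>s. \<sigma> s t)" and strict: "strict_mono_on {0..} (\<lambda>s. \<sigma> s t)"
    and "\<sigma> 0 t = 0" and pos: "\<And>s. 0 < s \<Longrightarrow> 0 < \<sigma> s t"
    by (simp_all add: classK_def)
  show "classK (\<lambda>s. F (\<sigma> s t) + \<sigma> s t)"
    unfolding classK_def
  proof (intro conjI allI impI)
    show "continuous_on {0..} (\<lambda>s. F (\<sigma> s t) + \<sigma> s t)"
      using classKL_nonneg[OF \<sigma> _ \<open>0 \<le> t\<close>]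
      by (intro continuous_on_add cont continuous_on_classN_comp[OF F cont]) simp
    show "strict_mono_on {0..} (\<lambda>s. F (\<sigma> s t) + \<sigma> s t)"
    proof (rule strict_mono_onI)
      fix r s :: real assume "r \<in> {0..}" "s \<in> {0..}" "r < s"
      then have "\<sigma> r t < \<sigma> s t" by (intro strict_mono_onD[OF strict])
      moreover have "F (\<sigma> r t) \<le> F (\<sigma> s t)"
        using calculation \<open>r \<in> {0..}\<close> classKL_nonneg[OF \<sigma> _ \<open>0 \<le> t\<close>, of r]
        by (intro classN_mono[OF F]) simp_all
      ultimately show "F (\<sigma> r t) + \<sigma> r t < F (\<sigma> s t) + \<sigma> s t" by simp
    qed
    show "F (\<sigma> 0 t) + \<sigma> 0 t = 0" using \<open>\<sigma> 0 t = 0\<close> F by (simp add: classN_def)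
    show "0 < F (\<sigma> s t) + \<sigma> s t" if "0 < s" for s
      using pos[OF that] classN_nonneg[OF F, of "\<sigma> s t"] by simp
  qed
next
  fix s :: real assume "0 \<le> s"
  then have anti: "antimono_on {0..} (\<sigma> s)" and lim: "(\<sigma> s \<longlongrightarrow> 0) at_top"
    using \<sigma> by (simp_all add: classKL_def)
  show "antimono_on {0..} (\<lambda>t. F (\<sigma> s t) + \<sigma> s t)"
  proof (rule monotone_onI)
    fix t t' :: real assume "t \<in> {0..}" "t' \<in> {0..}" "t \<le> t'"
    then have "\<sigma> s t' \<le> \<sigma> s t" by (rule monotone_onD[OF anti])
    moreover have "F (\<sigma> s t') \<le> F (\<sigma> s t)"
      using calculation \<open>t' \<in> {0..}\<close> classKL_nonneg[OF \<sigma> \<open>0 \<le> s\<close>, of t']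
      by (intro classN_mono[OF F]) simp_all
    ultimately show "F (\<sigma> s t') + \<sigma> s t' \<le> F (\<sigma> s t) + \<sigma> s t" by simp
  qed
  have eventually_nonneg: "\<forall>\<^sub>F t in at_top. \<sigma> s t \<in> {0..}"
    unfolding eventually_at_top_linorder
    by (rule exI[of _ 0]) (simp add: classKL_nonneg[OF \<sigma> \<open>0 \<le> s\<close>])
  have "continuous_on {0..} F" using F by (simp add: classN_def)
  then have "((\<lambda>t. F (\<sigma> s t)) \<longlongrightarrow> F 0) at_top"
    by (rule continuous_on_tendsto_compose[OF _ lim _ eventually_nonneg]) simp
  then have "((\<lambda>t. F (\<sigma> s t) + \<sigma> s t) \<longlongrightarrow> F 0 + 0) at_top"
    by (intro tendsto_add lim)
  then show "((\<lambda>t. F (\<sigma> s t) + \<sigma> s t) \<longlongrightarrow> 0) at_top"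
    using F by (simp add: classN_def)
qed

section \<open>Continuous monotone majorants\<close>

definition lin_interp :: "(int \<Rightarrow> real) \<Rightarrow> real \<Rightarrow> real" where
  "lin_interp c t = c \<lfloor>t\<rfloor> + (t - of_int \<lfloor>t\<rfloor>) * (c (\<lfloor>t\<rfloor> + 1) - c \<lfloor>t\<rfloor>)"

lemma lin_interp_on_segment:
  assumes "of_int k \<le> t" "t \<le> of_int k + 1"
  shows "lin_interp c t = c k + (t - of_int k) * (c (k + 1) - c k)"
proof (cases "t = of_int k + 1")
  case True
  then have "\<lfloor>t\<rfloor> = k + 1" by simp
  then show ?thesis using True by (simp add: lin_interp_def)
next
  case False
  then have "\<lfloor>t\<rfloor> = k" using assms by (simp add: floor_eq_iff)
  then show ?thesis by (simp add: lin_interp_def)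
qed

lemma isCont_lin_interp: "isCont (lin_interp c) t"
proof -
  have segment: "continuous_on {of_int k..of_int k + 1} (lin_interp c)" for k
  proof -
    have "continuous_on {of_int k..of_int k + 1} (\<lambda>t. c k + (t - of_int k) * (c (k + 1) - c k))"
      by (intro continuous_intros)
    then show ?thesis
      by (rule continuous_on_eq) (auto simp: lin_interp_on_segment)
  qed
  define k where "k = \<lfloor>t\<rfloor>"
  have "{of_int (k - 1)..of_int (k - 1) + 1} \<union> {of_int k..of_int k + 1}
      = {of_int k - 1..of_int k + (1::real)}"
    by auto
  then have "continuous_on {of_int k - 1..of_int k + 1} (lin_interp c)"
    using continuous_on_closed_Un[OF _ _ segment segment] by (metis closed_atLeastAtMost)
  moreover have "t \<in> interior {of_int k - 1..of_int k + (1::real)}"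
    using k_def by (simp add: floor_le_iff) linarith
  ultimately show ?thesis by (metis continuous_on_interior)
qed

lemma continuous_on_lin_interp: "continuous_on S (lin_interp c)"
  by (simp add: continuous_at_imp_continuous_on isCont_lin_interp)

lemma lin_interp_in_segment: "lin_interp c t \<in> closed_segment (c \<lfloor>t\<rfloor>) (c (\<lfloor>t\<rfloor> + 1))"
  unfolding in_segment(1) lin_interp_def
  by (rule exI[of _ "t - of_int \<lfloor>t\<rfloor>"]) (simp add: algebra_simps; linarith)

lemma lin_interp_lower_mono: "mono c \<Longrightarrow> c \<lfloor>t\<rfloor> \<le> lin_interp c t"
  using lin_interp_in_segment[of c t] by (simp add: closed_segment_eq_real_ivl monoD)

lemma lin_interp_upper_mono: "mono c \<Longrightarrow> lin_interp c t \<le> c (\<lfloor>t\<rfloor> + 1)"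
  using lin_interp_in_segment[of c t] by (simp add: closed_segment_eq_real_ivl monoD)

lemma lin_interp_lower_antimono: "antimono c \<Longrightarrow> c (\<lfloor>t\<rfloor> + 1) \<le> lin_interp c t"
  using lin_interp_in_segment[of c t] antimonoD[of c "\<lfloor>t\<rfloor>" "\<lfloor>t\<rfloor> + 1"]
  by (auto simp: closed_segment_eq_real_ivl split: if_splits)

lemma lin_interp_upper_antimono: "antimono c \<Longrightarrow> lin_interp c t \<le> c \<lfloor>t\<rfloor>"
  using lin_interp_in_segment[of c t] antimonoD[of c "\<lfloor>t\<rfloor>" "\<lfloor>t\<rfloor> + 1"]
  by (auto simp: closed_segment_eq_real_ivl split: if_splits)

lemma mono_lin_interp:
  assumes "mono c"
  shows "mono (lin_interp c)"
proof (rule monoI)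
  fix x y :: real
  assume "x \<le> y"
  show "lin_interp c x \<le> lin_interp c y"
  proof (cases "\<lfloor>x\<rfloor> = \<lfloor>y\<rfloor>")
    case True
    have "c \<lfloor>x\<rfloor> \<le> c (\<lfloor>x\<rfloor> + 1)" using assms by (simp add: monoD)
    then show ?thesis unfolding lin_interp_def True using \<open>x \<le> y\<close>
      by (simp add: mult_right_mono)
  next
    case False
    then have "\<lfloor>x\<rfloor> + 1 \<le> \<lfloor>y\<rfloor>" using \<open>x \<le> y\<close> by (meson floor_mono le_less zless_imp_add1_zle)
    then have "c (\<lfloor>x\<rfloor> + 1) \<le> c \<lfloor>y\<rfloor>" using assms by (simp add: monoD)
    then show ?thesis
      using lin_interp_upper_mono[OF assms, of x] lin_interp_lower_mono[OF assms, of y] by linarith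
  qed
qed

lemma antimono_lin_interp:
  assumes "antimono c"
  shows "antimono (lin_interp c)"
proof -
  have "mono (\<lambda>k. - c k)" using assms by (simp add: antimono_def monoI)
  then have "mono (lin_interp (\<lambda>k. - c k))" by (rule mono_lin_interp)
  moreover have "lin_interp (\<lambda>k. - c k) = (\<lambda>t. - lin_interp c t)"
    by (simp add: lin_interp_def fun_eq_iff algebra_simps)
  ultimately show ?thesis by (intro antimonoI) (metis monoD neg_le_iff_le)
qed

lemma continuous_mono_majorant_seq:
  fixes b :: "nat \<Rightarrow> real"
  obtains \<beta> :: "real \<Rightarrow> real" where "continuous_on UNIV \<beta>" "mono \<beta>" "\<And>t. 1 \<le> \<beta> t"
    "\<And>t i. i \<le> nat \<lceil>t\<rceil> \<Longrightarrow> b i \<le> \<beta> t"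
proof -
  define c where "c k = 1 + (\<Sum>i\<le>nat (k + 1). \<bar>b i\<bar>)" for k :: int
  have "mono c" unfolding c_def
    by (intro monoI add_left_mono sum_mono2) (auto simp: nat_mono)
  have "1 \<le> c k" for k unfolding c_def by (simp add: sum_nonneg)
  then have "1 \<le> lin_interp c t" for t
    using lin_interp_lower_mono[OF \<open>mono c\<close>, of t] by (meson order_trans)
  moreover have "b i \<le> lin_interp c t" if "i \<le> nat \<lceil>t\<rceil>" for t i
  proof -
    have "i \<le> nat (\<lfloor>t\<rfloor> + 1)" using that by linarith
    then have "\<bar>b i\<bar> \<le> (\<Sum>i\<le>nat (\<lfloor>t\<rfloor> + 1). \<bar>b i\<bar>)" by (intro member_le_sum) auto
    then have "b i \<le> c \<lfloor>t\<rfloor>" unfolding c_def by linarith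
    then show ?thesis using lin_interp_lower_mono[OF \<open>mono c\<close>, of t] by linarith
  qed
  ultimately show ?thesis
    using mono_lin_interp[OF \<open>mono c\<close>] by (intro that[of "lin_interp c"] continuous_on_lin_interp)
qed

lemma antimono_continuous_majorant:
  fixes m :: "real \<Rightarrow> real"
  assumes "antimono m" "(m \<longlongrightarrow> 0) at_top"
  obtains \<mu> where "continuous_on UNIV \<mu>" "antimono \<mu>" "(\<mu> \<longlongrightarrow> 0) at_top" "\<And>s. m s \<le> \<mu> s"
proof -
  define d where "d k = m (of_int k - 1)" for k :: int
  have "antimono d"
    unfolding d_def by (rule antimonoI, rule antimonoD[OF assms(1)]) simp
  have lower: "m s \<le> lin_interp d s" for s
  proof -
    have "m s \<le> d (\<lfloor>s\<rfloor> + 1)" unfolding d_def by (rule antimonoD[OF assms(1)]) simp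
    then show ?thesis using lin_interp_lower_antimono[OF \<open>antimono d\<close>, of s] by linarith
  qed
  have upper: "lin_interp d s \<le> m (s - 2)" for s
  proof -
    have "d \<lfloor>s\<rfloor> \<le> m (s - 2)" unfolding d_def by (rule antimonoD[OF assms(1)]) linarith
    then show ?thesis using lin_interp_upper_antimono[OF \<open>antimono d\<close>, of s] by linarith
  qed
  have shifted: "((\<lambda>s. m (s - 2)) \<longlongrightarrow> 0) at_top"
    by (rule filterlim_compose[OF assms(2)])
      (rule filterlim_tendsto_add_at_top[OF tendsto_const filterlim_ident, of "- 2", simplified])
  have "(lin_interp d \<longlongrightarrow> 0) at_top"
  proof (rule tendsto_sandwich[OF _ _ assms(2) shifted])
    show "\<forall>\<^sub>F s in at_top. m s \<le> lin_interp d s" using lower by simp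
    show "\<forall>\<^sub>F s in at_top. lin_interp d s \<le> m (s - 2)" using upper by simp
  qed
  with lower show ?thesis
    by (intro that[OF continuous_on_lin_interp antimono_lin_interp[OF \<open>antimono d\<close>]])
qed

section \<open>Comparison-function majorants of uniformly bounded families\<close>

lemma log_scale_majorant:
  fixes D :: "real \<Rightarrow> real"
  assumes "mono D"
  obtains G where "continuous_on UNIV G" "mono G" "\<And>s. D (exp s) \<le> G s" "\<And>s. G s \<le> D (exp 2 * exp s)"
proof -
  define c where "c k = D (exp (of_int k + 1))" for k :: int
  have "mono c" unfolding c_def by (intro monoI monoD[OF \<open>mono D\<close>]) simp
  have "D (exp s) \<le> lin_interp c s" for s
  proof -
    have "D (exp s) \<le> c \<lfloor>s\<rfloor>" unfolding c_def by (intro monoD[OF \<open>mono D\<close>]) (simp; linarith)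
    then show ?thesis using lin_interp_lower_mono[OF \<open>mono c\<close>, of s] by linarith
  qed
  moreover have "lin_interp c s \<le> D (exp 2 * exp s)" for s
  proof -
    have "c (\<lfloor>s\<rfloor> + 1) \<le> D (exp (2 + s))" unfolding c_def by (intro monoD[OF \<open>mono D\<close>]) simp
    then show ?thesis using lin_interp_upper_mono[OF \<open>mono c\<close>, of s] by (simp add: exp_add)
  qed
  ultimately show ?thesis
    using mono_lin_interp[OF \<open>mono c\<close>] by (intro that[of "lin_interp c"] continuous_on_lin_interp)
qed

lemma mono_classK_majorant:
  fixes D :: "real \<Rightarrow> real"
  assumes "mono D" and D_nonneg: "\<And>r. 0 \<le> D r" and D_small: "\<And>\<epsilon>. 0 < \<epsilon> \<Longrightarrow> \<exists>\<eta>>0. D \<eta> \<le> \<epsilon>"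
  obtains \<kappa> where "classK \<kappa>" "\<And>r. 0 < r \<Longrightarrow> D r \<le> \<kappa> r"
proof -
  obtain G :: "real \<Rightarrow> real" where G_cont: "continuous_on UNIV G" and "mono G"
    and G_lower: "\<And>s. D (exp s) \<le> G s" and G_upper: "\<And>s. G s \<le> D (exp 2 * exp s)"
    by (fact log_scale_majorant[OF \<open>mono D\<close>])
  have G_nonneg: "0 \<le> G s" for s using G_lower[of s] D_nonneg[of "exp s"] by linarith
  \<comment> \<open>For r > 0 we get r \<le> \<kappa> r \<le> r + D (exp 2 * r), which gives continuity at 0.\<close>
  define \<kappa> where "\<kappa> r = (if r \<le> 0 then 0 else r + G (ln r))" for r
  have "continuous (at r within {0..}) \<kappa>" if "0 \<le> r" for r
  proof (cases "r = 0")
    case False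
    have "continuous_on {0<..} (\<lambda>r. r + G (ln r))"
      by (intro continuous_intros continuous_on_compose2[OF G_cont]) auto
    then have "continuous_on {0<..} \<kappa>"
      by (rule continuous_on_eq) (auto simp: \<kappa>_def)
    then have "isCont \<kappa> r"
      using False that by (intro continuous_on_interior[of "{0<..}"]) (auto simp: interior_open)
    then show ?thesis by (rule continuous_at_imp_continuous_at_within)
  next
    case True
    show ?thesis unfolding continuous_within_eps_delta True
    proof (intro allI impI)
      fix \<epsilon> :: real assume "0 < \<epsilon>"
      then obtain \<eta> where "0 < \<eta>" "D \<eta> \<le> \<epsilon> / 2" using D_small[of "\<epsilon> / 2"] by auto
      define \<delta> where "\<delta> = min (\<epsilon> / 2) (\<eta> / exp 2)"
      have "dist (\<kappa> r) (\<kappa> 0) < \<epsilon>" if "0 \<le> r" "r < \<delta>" for r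
      proof (cases "r = 0")
        case False
        then have "0 < r" using that by simp
        have "exp 2 * r \<le> \<eta>" using \<open>r < \<delta>\<close> unfolding \<delta>_def by (simp add: field_simps)
        then have "G (ln r) \<le> \<epsilon> / 2"
          using G_upper[of "ln r"] monoD[OF \<open>mono D\<close>, of "exp 2 * r" \<eta>] \<open>0 < r\<close> \<open>D \<eta> \<le> \<epsilon> / 2\<close>
          by simp
        moreover have "r < \<epsilon> / 2" using \<open>r < \<delta>\<close> \<delta>_def by simp
        ultimately show ?thesis using \<open>0 < r\<close> G_nonneg[of "ln r"] by (simp add: \<kappa>_def dist_real_def)
      qed (use \<open>0 < \<epsilon>\<close> in \<open>simp add: \<kappa>_def\<close>)
      moreover have "0 < \<delta>" using \<open>0 < \<epsilon>\<close> \<open>0 < \<eta>\<close> by (simp add: \<delta>_def)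
      ultimately show "\<exists>\<delta>>0. \<forall>r\<in>{0..}. dist r 0 < \<delta> \<longrightarrow> dist (\<kappa> r) (\<kappa> 0) < \<epsilon>"
        by (auto simp: dist_real_def)
    qed
  qed
  then have "continuous_on {0..} \<kappa>" by (simp add: continuous_on_eq_continuous_within)
  moreover have "strict_mono_on {0..} \<kappa>"
  proof (rule strict_mono_onI)
    fix r s :: real assume "r \<in> {0..}" "s \<in> {0..}" "r < s"
    show "\<kappa> r < \<kappa> s"
    proof (cases "r = 0")
      case False
      then have "G (ln r) \<le> G (ln s)"
        using \<open>r \<in> {0..}\<close> \<open>r < s\<close> by (intro monoD[OF \<open>mono G\<close>]) simp
      then show ?thesis using False \<open>r \<in> {0..}\<close> \<open>r < s\<close> by (simp add: \<kappa>_def)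
    qed (use \<open>r < s\<close> G_nonneg in \<open>simp add: \<kappa>_def add_pos_nonneg\<close>)
  qed
  moreover have "0 < \<kappa> r" if "0 < r" for r
    using that G_nonneg[of "ln r"] by (simp add: \<kappa>_def)
  moreover have "D r \<le> \<kappa> r" if "0 < r" for r
    using that G_lower[of "ln r"] by (simp add: \<kappa>_def)
  ultimately show ?thesis
    by (intro that[of \<kappa>]) (auto simp: classK_def \<kappa>_def)
qed

lemma classK_majorant:
  fixes S :: "(real \<times> real) set"
  assumes nonneg: "\<And>r w. (r, w) \<in> S \<Longrightarrow> 0 \<le> r"
    and bounded: "\<And>R. \<exists>B. \<forall>r w. (r, w) \<in> S \<and> r \<le> R \<longrightarrow> w \<le> B"
    and small: "\<And>\<epsilon>. 0 < \<epsilon> \<Longrightarrow> \<exists>\<eta>>0. \<forall>r w. (r, w) \<in> S \<and> r \<le> \<eta> \<longrightarrow> w \<le> \<epsilon>"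
  obtains \<kappa> where "classK \<kappa>" "\<And>r w. (r, w) \<in> S \<Longrightarrow> w \<le> \<kappa> r"
proof -
  define D where "D R = Sup (insert 0 {w. \<exists>r. (r, w) \<in> S \<and> r \<le> R})" for R
  have bdd: "bdd_above (insert 0 {w. \<exists>r. (r, w) \<in> S \<and> r \<le> R})" for R
  proof -
    obtain B where "\<forall>r w. (r, w) \<in> S \<and> r \<le> R \<longrightarrow> w \<le> B" using bounded by blast
    then show ?thesis by (intro bdd_aboveI[of _ "max 0 B"]) (auto simp: le_max_iff_disj)
  qed
  have D_upper: "w \<le> D r" if "(r, w) \<in> S" for r w
    unfolding D_def using that by (intro cSup_upper bdd) auto
  have "mono D"
    unfolding D_def by (intro monoI cSup_subset_mono bdd) auto
  have D_nonneg: "0 \<le> D R" for R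
    unfolding D_def by (intro cSup_upper bdd) auto
  have D_small: "\<exists>\<eta>>0. D \<eta> \<le> \<epsilon>" if "0 < \<epsilon>" for \<epsilon>
  proof -
    obtain \<eta> where "0 < \<eta>" "\<forall>r w. (r, w) \<in> S \<and> r \<le> \<eta> \<longrightarrow> w \<le> \<epsilon>"
      using small[OF \<open>0 < \<epsilon>\<close>] by blast
    then have "D \<eta> \<le> \<epsilon>" unfolding D_def using \<open>0 < \<epsilon>\<close> by (intro cSup_least) auto
    then show ?thesis using \<open>0 < \<eta>\<close> by blast
  qed
  obtain \<kappa> where "classK \<kappa>" and D_le_\<kappa>: "\<And>r. 0 < r \<Longrightarrow> D r \<le> \<kappa> r"
    using mono_classK_majorant[OF \<open>mono D\<close> D_nonneg D_small] by blast
  have "w \<le> \<kappa> r" if "(r, w) \<in> S" for r w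
  proof (cases "r = 0")
    case True
    have "D 0 \<le> \<epsilon>" if "0 < \<epsilon>" for \<epsilon>
    proof -
      obtain \<eta> where "0 < \<eta>" "D \<eta> \<le> \<epsilon>" using D_small[OF \<open>0 < \<epsilon>\<close>] by blast
      then show ?thesis using monoD[OF \<open>mono D\<close>, of 0 \<eta>] by linarith
    qed
    then have "D 0 \<le> 0" by (meson dense not_le)
    then show ?thesis using D_upper[OF that] \<open>classK \<kappa>\<close> True by (simp add: classK_def)
  next
    case False
    then have "0 < r" using nonneg[OF that] by simp
    then show ?thesis using D_upper[OF that] D_le_\<kappa> by (meson order_trans)
  qed
  with \<open>classK \<kappa>\<close> show ?thesis by (rule that)
qed

lemma shifted_decay_majorant:
  fixes S :: "(real \<times> real \<times> real) set"
  assumes bounded: "\<And>R. \<exists>B. \<forall>r h w. (r, h, w) \<in> S \<and> r \<le> R \<longrightarrow> w \<le> B"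
    and decay: "\<And>\<epsilon> R. 0 < \<epsilon> \<Longrightarrow> \<exists>T. \<forall>r h w. (r, h, w) \<in> S \<and> r \<le> R \<and> T \<le> h \<longrightarrow> w \<le> \<epsilon>"
  obtains \<theta> m :: "real \<Rightarrow> real" where "continuous_on UNIV \<theta>" "mono \<theta>" "antimono m"
    "(m \<longlongrightarrow> 0) at_top" "\<And>r h w. (r, h, w) \<in> S \<Longrightarrow> w \<le> m (h - \<theta> r)"
proof -
  have "\<forall>j::nat. \<exists>T. \<forall>r h w. (r, h, w) \<in> S \<and> r \<le> real j \<and> T \<le> h \<longrightarrow> w \<le> 1 / (real j + 1)"
    using decay by simp
  then obtain T where T: "\<And>j r h w. (r, h, w) \<in> S \<Longrightarrow> r \<le> real j \<Longrightarrow> T j \<le> h \<Longrightarrow> w \<le> 1 / (real j + 1)"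
    by metis
  obtain \<theta> :: "real \<Rightarrow> real" where "continuous_on UNIV \<theta>" "mono \<theta>" and \<theta>_ge_1: "\<And>r. 1 \<le> \<theta> r"
    and \<theta>_ge_T: "\<And>r j. j \<le> nat \<lceil>r\<rceil> \<Longrightarrow> 2 * \<bar>T j\<bar> + real j + 1 \<le> \<theta> r"
    using continuous_mono_majorant_seq[of "\<lambda>j. 2 * \<bar>T j\<bar> + real j + 1"] by blast
  \<comment> \<open>For j = \<lceil>r\<rceil>, half of \<theta> r dominates the time T j after which points of size
    at most j stay below 1 / (j + 1).\<close>
  have T_index: "r \<le> real (nat \<lceil>r\<rceil>) \<and> 2 * \<bar>T (nat \<lceil>r\<rceil>)\<bar> + real (nat \<lceil>r\<rceil>) + 1 \<le> \<theta> r" for r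
    using \<theta>_ge_T[of "nat \<lceil>r\<rceil>" r] by linarith
  define M where "M s = insert 0 {w. \<exists>r h. (r, h, w) \<in> S \<and> s + \<theta> r \<le> h}" for s
  define m where "m s = Sup (M s)" for s
  have bdd: "bdd_above (M s)" for s
  proof -
    obtain B where B: "\<forall>r h w. (r, h, w) \<in> S \<and> r \<le> \<bar>2 * s\<bar> \<longrightarrow> w \<le> B" using bounded by blast
    have "w \<le> max 1 B" if "(r, h, w) \<in> S" "s + \<theta> r \<le> h" for r h w
    proof (cases "- 2 * s \<le> \<theta> r")
      case True
      then have "T (nat \<lceil>r\<rceil>) \<le> h" using T_index[of r] that(2) by linarith
      then have "w \<le> 1 / (real (nat \<lceil>r\<rceil>) + 1)" using T[OF that(1)] T_index[of r] by blast
      also have "\<dots> \<le> 1" by simp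
      finally show ?thesis by simp
    next
      case False
      then have "r \<le> \<bar>2 * s\<bar>" using T_index[of r] by linarith
      then show ?thesis using B that(1) by fastforce
    qed
    then show ?thesis unfolding M_def by (intro bdd_aboveI[of _ "max 1 B"]) auto
  qed
  have m_upper: "w \<le> m s" if "(r, h, w) \<in> S" "s + \<theta> r \<le> h" for r h w s
    unfolding m_def M_def using that by (intro cSup_upper bdd[unfolded M_def]) auto
  have m_nonneg: "0 \<le> m s" for s
    unfolding m_def M_def by (intro cSup_upper bdd[unfolded M_def]) auto
  have "M s' \<subseteq> M s" if "s \<le> s'" for s s'
    unfolding M_def using that by force
  then have "antimono m"
    unfolding m_def by (intro antimonoI cSup_subset_mono bdd) (auto simp: M_def)
  have m_small: "\<forall>\<^sub>F s in at_top. m s \<le> \<epsilon>" if "0 < \<epsilon>" for \<epsilon>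
  proof -
    define J where "J = nat \<lceil>1 / \<epsilon>\<rceil>"
    have "1 / \<epsilon> \<le> real J" unfolding J_def by linarith
    then have J: "1 / (real J + 1) \<le> \<epsilon>" using \<open>0 < \<epsilon>\<close> by (simp add: field_simps)
    obtain T' where T': "\<forall>r h w. (r, h, w) \<in> S \<and> r \<le> real J \<and> T' \<le> h \<longrightarrow> w \<le> \<epsilon>"
      using decay[OF \<open>0 < \<epsilon>\<close>] by blast
    have "w \<le> \<epsilon>" if "0 \<le> s" "T' \<le> s" "(r, h, w) \<in> S" "s + \<theta> r \<le> h" for r h w s
    proof (cases "J \<le> nat \<lceil>r\<rceil>")
      case True
      have "T (nat \<lceil>r\<rceil>) \<le> h" using T_index[of r] that by linarith
      then have "w \<le> 1 / (real (nat \<lceil>r\<rceil>) + 1)" using T[OF that(3)] T_index[of r] by blast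
      also have "\<dots> \<le> 1 / (real J + 1)" using True by (simp add: frac_le)
      finally show ?thesis using J by simp
    next
      case False
      then have "r \<le> real J" using T_index[of r] by linarith
      moreover have "T' \<le> h" using that \<theta>_ge_1[of r] by linarith
      ultimately show ?thesis using T' that(3) by blast
    qed
    then have "m s \<le> \<epsilon>" if "max 0 T' \<le> s" for s
      unfolding m_def M_def using that \<open>0 < \<epsilon>\<close> by (intro cSup_least) auto
    then show ?thesis unfolding eventually_at_top_linorder by blast
  qed
  have "(m \<longlongrightarrow> 0) at_top"
  proof (rule order_tendstoI)
    show "\<forall>\<^sub>F s in at_top. a < m s" if "a < 0" for a
    proof (rule always_eventually)
      show "\<forall>s. a < m s" using that m_nonneg less_le_trans by blast
    qed
    show "\<forall>\<^sub>F s in at_top. m s < a" if "0 < a" for a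
    proof -
      have "\<forall>\<^sub>F s in at_top. m s \<le> a / 2" using that by (intro m_small) simp
      then show ?thesis by (rule eventually_mono) (use that in linarith)
    qed
  qed
  with \<open>continuous_on UNIV \<theta>\<close> \<open>mono \<theta>\<close> \<open>antimono m\<close> show ?thesis
    by (rule that) (use m_upper in auto)
qed

lemma classKL_min_shift:
  assumes \<kappa>: "classK \<kappa>"
    and \<mu>: "continuous_on UNIV \<mu>" "antimono \<mu>" "(\<mu> \<longlongrightarrow> 0) at_top"
    and \<theta>: "continuous_on UNIV \<theta>" "mono \<theta>"
  shows "classKL (\<lambda>r h. min (\<kappa> r) (\<mu> (h - \<theta> r)) + r * exp (- h))"
    (is "classKL ?\<sigma>")
proof -
  have \<mu>_nonneg: "0 \<le> \<mu> s" for s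
  proof (rule tendsto_upperbound[OF \<mu>(3)])
    show "\<forall>\<^sub>F y in at_top. \<mu> y \<le> \<mu> s"
      unfolding eventually_at_top_linorder by (blast intro: antimonoD[OF \<mu>(2)])
  qed simp
  have \<kappa>_cont: "continuous_on {0..} \<kappa>" and \<kappa>_mono: "strict_mono_on {0..} \<kappa>" and "\<kappa> 0 = 0"
    using \<kappa> by (auto simp: classK_def)
  have shifted_cont: "continuous_on A (\<lambda>p. \<mu> (g p - \<theta> (f p)))"
    if "continuous_on A f" "continuous_on A g" for A and f g :: "'a::topological_space \<Rightarrow> real"
    by (intro continuous_on_compose2[OF \<mu>(1)] continuous_intros continuous_on_compose2[OF \<theta>(1)] that)
      auto
  have "continuous_on ({0..} \<times> {0..}) (\<lambda>(r, h). ?\<sigma> r h)"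
    unfolding case_prod_beta
    by (intro continuous_intros continuous_on_compose2[OF \<kappa>_cont] shifted_cont) auto
  moreover have "classK (\<lambda>r. ?\<sigma> r h)" if "0 \<le> h" for h
    unfolding classK_def
  proof (intro conjI allI impI)
    show "continuous_on {0..} (\<lambda>r. ?\<sigma> r h)"
      by (intro continuous_intros \<kappa>_cont shifted_cont)
    \<comment> \<open>The minimum alone is only nondecreasing in r; the term r * exp (- h) makes it strict.\<close>
    show "strict_mono_on {0..} (\<lambda>r. ?\<sigma> r h)"
    proof (rule strict_mono_onI)
      fix r s :: real assume "r \<in> {0..}" "s \<in> {0..}" "r < s"
      then have "\<kappa> r < \<kappa> s" by (intro strict_mono_onD[OF \<kappa>_mono])
      moreover have "\<mu> (h - \<theta> r) \<le> \<mu> (h - \<theta> s)"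
        using \<open>r < s\<close> by (intro antimonoD[OF \<mu>(2)]) (simp add: monoD[OF \<theta>(2)])
      moreover have "r * exp (- h) < s * exp (- h)" using \<open>r < s\<close> by simp
      ultimately show "?\<sigma> r h < ?\<sigma> s h" by linarith
    qed
    show "?\<sigma> 0 h = 0" using \<open>\<kappa> 0 = 0\<close> \<mu>_nonneg by simp
    show "0 < ?\<sigma> r h" if "0 < r" for r
      using that classK_nonneg[OF \<kappa>, of r] \<mu>_nonneg[of "h - \<theta> r"] by (simp add: add_nonneg_pos)
  qed
  moreover have "antimono_on {0..} (?\<sigma> r) \<and> (?\<sigma> r \<longlongrightarrow> 0) at_top" if "0 \<le> r" for r
  proof
    show "antimono_on {0..} (?\<sigma> r)"
    proof (rule monotone_onI)
      fix h h' :: real assume "h \<in> {0..}" "h' \<in> {0..}" "h \<le> h'"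
      then have "\<mu> (h' - \<theta> r) \<le> \<mu> (h - \<theta> r)" by (intro antimonoD[OF \<mu>(2)]) simp
      moreover have "r * exp (- h') \<le> r * exp (- h)"
        using \<open>h \<le> h'\<close> \<open>0 \<le> r\<close> by (intro mult_left_mono) auto
      ultimately show "?\<sigma> r h' \<le> ?\<sigma> r h" by linarith
    qed
    have "((\<lambda>h. \<mu> (h - \<theta> r)) \<longlongrightarrow> 0) at_top"
      by (rule filterlim_compose[OF \<mu>(3)])
        (rule filterlim_tendsto_add_at_top[OF tendsto_const filterlim_ident, of "- \<theta> r", simplified])
    moreover have "((\<lambda>h. r * exp (- h)) \<longlongrightarrow> r * 0) at_top"
      by (intro tendsto_intros) (rule filterlim_compose[OF exp_at_bot filterlim_uminus_at_bot_at_top])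
    ultimately have "(?\<sigma> r \<longlongrightarrow> min (\<kappa> r) 0 + r * 0) at_top"
      by (intro tendsto_add tendsto_min tendsto_const)
    then show "(?\<sigma> r \<longlongrightarrow> 0) at_top" using classK_nonneg[OF \<kappa> \<open>0 \<le> r\<close>] by simp
  qed
  ultimately show ?thesis unfolding classKL_def by blast
qed

lemma classKL_majorant:
  fixes S :: "(real \<times> real \<times> real) set"
  assumes nonneg: "\<And>r h w. (r, h, w) \<in> S \<Longrightarrow> 0 \<le> r"
    and bounded: "\<And>R. \<exists>B. \<forall>r h w. (r, h, w) \<in> S \<and> r \<le> R \<longrightarrow> w \<le> B"
    and small: "\<And>\<epsilon>. 0 < \<epsilon> \<Longrightarrow> \<exists>\<eta>>0. \<forall>r h w. (r, h, w) \<in> S \<and> r \<le> \<eta> \<longrightarrow> w \<le> \<epsilon>"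
    and decay: "\<And>\<epsilon> R. 0 < \<epsilon> \<Longrightarrow> \<exists>T. \<forall>r h w. (r, h, w) \<in> S \<and> r \<le> R \<and> T \<le> h \<longrightarrow> w \<le> \<epsilon>"
  obtains \<sigma> where "classKL \<sigma>" "\<And>r h w. (r, h, w) \<in> S \<Longrightarrow> w \<le> \<sigma> r h"
proof -
  let ?S = "(\<lambda>(r, h, w). (r, w)) ` S"
  have "0 \<le> r" if "(r, w) \<in> ?S" for r w using that nonneg by auto
  moreover have "\<exists>B. \<forall>r w. (r, w) \<in> ?S \<and> r \<le> R \<longrightarrow> w \<le> B" for R
    using bounded[of R] by fastforce
  moreover have "\<exists>\<eta>>0. \<forall>r w. (r, w) \<in> ?S \<and> r \<le> \<eta> \<longrightarrow> w \<le> \<epsilon>" if "0 < \<epsilon>" for \<epsilon>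
    using small[OF that] by fastforce
  ultimately obtain \<kappa> where "classK \<kappa>" and \<kappa>: "\<And>r w. (r, w) \<in> ?S \<Longrightarrow> w \<le> \<kappa> r"
    using classK_majorant[of ?S] by blast
  obtain \<theta> m where \<theta>: "continuous_on UNIV \<theta>" "mono \<theta>" and "antimono m" "(m \<longlongrightarrow> 0) at_top"
    and m: "\<And>r h w. (r, h, w) \<in> S \<Longrightarrow> w \<le> m (h - \<theta> r)"
    using shifted_decay_majorant[OF bounded decay] by blast
  obtain \<mu> where \<mu>: "continuous_on UNIV \<mu>" "antimono \<mu>" "(\<mu> \<longlongrightarrow> 0) at_top" and "\<And>s. m s \<le> \<mu> s"
    using antimono_continuous_majorant[OF \<open>antimono m\<close> \<open>(m \<longlongrightarrow> 0) at_top\<close>] by blast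
  have "w \<le> min (\<kappa> r) (\<mu> (h - \<theta> r)) + r * exp (- h)" if "(r, h, w) \<in> S" for r h w
  proof -
    have "w \<le> \<kappa> r" using \<kappa>[of r w] that by force
    moreover have "w \<le> \<mu> (h - \<theta> r)" using m[OF that] \<open>\<And>s. m s \<le> \<mu> s\<close> order_trans by blast
    moreover have "0 \<le> r * exp (- h)" using nonneg[OF that] by simp
    ultimately show ?thesis by linarith
  qed
  with classKL_min_shift[OF \<open>classK \<kappa>\<close> \<mu> \<theta>] show ?thesis by (rule that)
qed

section \<open>The KL estimate\<close>

(* Initial times in [k, k + 1) get so large a weight that a weighted state of size at most k + 1
   lies in the neighbourhood on which the smallness hypothesis with T = k + 1 gives
   w \<le> 1 / (k + 1). *)
lemma uniform_smallness_weight: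
  fixes S :: "(real \<times> real \<times> real \<times> real) set"
  assumes nonneg: "\<And>t0 n h w. (t0, n, h, w) \<in> S \<Longrightarrow> 0 \<le> n"
    and small: "\<And>\<epsilon> T. 0 < \<epsilon> \<Longrightarrow>
      \<exists>\<eta>>0. \<forall>t0 n h w. (t0, n, h, w) \<in> S \<and> n \<le> \<eta> \<and> t0 \<le> T \<longrightarrow> w \<le> \<epsilon>"
  obtains \<beta> where "classKplus \<beta>" "\<And>t. 1 \<le> \<beta> t"
    "\<And>t0 n h w N. (t0, n, h, w) \<in> S \<Longrightarrow> \<beta> t0 * n \<le> real N + 1 \<Longrightarrow>
      w \<le> 1 / (real N + 1) \<or> t0 \<le> real N"
proof -
  have "\<forall>k::nat. \<exists>\<eta>>0. \<forall>t0 n h w.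
      (t0, n, h, w) \<in> S \<and> n \<le> \<eta> \<and> t0 \<le> real k + 1 \<longrightarrow> w \<le> 1 / (real k + 1)"
    using small by simp
  then obtain \<eta> where \<eta>_pos: "\<And>k. 0 < \<eta> k" and \<eta>: "\<And>k t0 n h w. (t0, n, h, w) \<in> S \<Longrightarrow>
      n \<le> \<eta> k \<Longrightarrow> t0 \<le> real k + 1 \<Longrightarrow> w \<le> 1 / (real k + 1)"
    unfolding choice_iff by blast
  obtain \<beta> :: "real \<Rightarrow> real" where "continuous_on UNIV \<beta>" "mono \<beta>" and \<beta>_ge_1: "\<And>t. 1 \<le> \<beta> t"
    and \<beta>_ge: "\<And>t k. k \<le> nat \<lceil>t\<rceil> \<Longrightarrow> (real k + 1) / \<eta> k \<le> \<beta> t"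
    by (fact continuous_mono_majorant_seq[of "\<lambda>k. (real k + 1) / \<eta> k"])
  then have "classKplus \<beta>"
    unfolding classKplus_def by (auto intro: continuous_on_subset less_le_trans[OF zero_less_one])
  have diagonal: "w \<le> 1 / (real (nat \<lfloor>t0\<rfloor>) + 1)"
    if "(t0, n, h, w) \<in> S" "\<beta> t0 * n \<le> real (nat \<lfloor>t0\<rfloor>) + 1" for t0 n h w
  proof -
    define k where "k = nat \<lfloor>t0\<rfloor>"
    have "(real k + 1) * n / \<eta> k \<le> \<beta> t0 * n"
      using \<beta>_ge[of k t0] nonneg[OF that(1)] unfolding k_def
      by (subst times_divide_eq_left[symmetric], intro mult_right_mono) linarith+
    then have "(real k + 1) * n / \<eta> k \<le> real k + 1" using that(2) unfolding k_def by linarith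
    then have "(real k + 1) * n \<le> (real k + 1) * \<eta> k"
      using \<eta>_pos[of k] by (simp add: pos_divide_le_eq mult.commute)
    then have "n \<le> \<eta> k" by (simp add: mult_le_cancel_left_pos add_pos_nonneg)
    moreover have "t0 \<le> real k + 1" unfolding k_def by linarith
    ultimately show ?thesis using \<eta>[OF that(1)] unfolding k_def by blast
  qed
  have dichotomy: "w \<le> 1 / (real N + 1) \<or> t0 \<le> real N"
    if "(t0, n, h, w) \<in> S" "\<beta> t0 * n \<le> real N + 1" for t0 n h w N
  proof (cases "N \<le> nat \<lfloor>t0\<rfloor>")
    case True
    then have "w \<le> 1 / (real (nat \<lfloor>t0\<rfloor>) + 1)" using that by (intro diagonal) auto
    also have "\<dots> \<le> 1 / (real N + 1)" using True by (simp add: frac_le)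
    finally show ?thesis ..
  qed linarith
  with \<open>classKplus \<beta>\<close> \<beta>_ge_1 show ?thesis by (rule that)
qed

lemma weighted_classKL_majorant:
  fixes S :: "(real \<times> real \<times> real \<times> real) set"
  assumes nonneg: "\<And>t0 n h w. (t0, n, h, w) \<in> S \<Longrightarrow> 0 \<le> n"
    and bounded: "\<And>N T. \<exists>B. \<forall>t0 n h w. (t0, n, h, w) \<in> S \<and> n \<le> N \<and> t0 \<le> T \<longrightarrow> w \<le> B"
    and small: "\<And>\<epsilon> T. 0 < \<epsilon> \<Longrightarrow>
      \<exists>\<eta>>0. \<forall>t0 n h w. (t0, n, h, w) \<in> S \<and> n \<le> \<eta> \<and> t0 \<le> T \<longrightarrow> w \<le> \<epsilon>"
    and decay: "\<And>\<epsilon> N T. 0 < \<epsilon> \<Longrightarrow>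
      \<exists>\<tau>. \<forall>t0 n h w. (t0, n, h, w) \<in> S \<and> n \<le> N \<and> t0 \<le> T \<and> \<tau> \<le> h \<longrightarrow> w \<le> \<epsilon>"
  obtains \<sigma> \<beta> where "classKL \<sigma>" "classKplus \<beta>"
    "\<And>t0 n h w. (t0, n, h, w) \<in> S \<Longrightarrow> w \<le> \<sigma> (\<beta> t0 * n) h"
proof -
  obtain \<beta> where "classKplus \<beta>" and \<beta>_ge_1: "\<And>t. 1 \<le> \<beta> t"
    and dichotomy: "\<And>t0 n h w N. (t0, n, h, w) \<in> S \<Longrightarrow> \<beta> t0 * n \<le> real N + 1 \<Longrightarrow>
      w \<le> 1 / (real N + 1) \<or> t0 \<le> real N"
    using uniform_smallness_weight[of S] nonneg small by blast
  have weight_ge: "n \<le> \<beta> t0 * n" if "(t0, n, h, w) \<in> S" for t0 n h w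
    using mult_right_mono[OF \<beta>_ge_1 nonneg[OF that]] by simp
  have inverse_le: "1 / (real N + 1) \<le> \<epsilon>" if "0 < \<epsilon>" "1 / \<epsilon> \<le> real N" for \<epsilon> N
    using that by (simp add: field_simps)
  let ?S = "(\<lambda>(t0, n, h, w). (\<beta> t0 * n, h, w)) ` S"
  have S_nonneg: "0 \<le> r" if "(r, h, w) \<in> ?S" for r h w
    using that weight_ge nonneg by force
  have S_bounded: "\<exists>B. \<forall>r h w. (r, h, w) \<in> ?S \<and> r \<le> R \<longrightarrow> w \<le> B" for R
  proof -
    define N where "N = nat \<lceil>R\<rceil>"
    obtain B where B: "\<forall>t0 n h w. (t0, n, h, w) \<in> S \<and> n \<le> R \<and> t0 \<le> real N \<longrightarrow> w \<le> B"
      using bounded by blast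
    have "w \<le> max 1 B" if mem: "(t0, n, h, w) \<in> S" and weighted: "\<beta> t0 * n \<le> R" for t0 n h w
    proof -
      have "\<beta> t0 * n \<le> real N + 1" using weighted unfolding N_def by linarith
      then consider "w \<le> 1 / (real N + 1)" | "t0 \<le> real N" using dichotomy[OF mem] by blast
      then show ?thesis
      proof cases
        case 1
        moreover have "1 / (real N + 1) \<le> 1" by simp
        ultimately show ?thesis by linarith
      next
        case 2
        moreover have "n \<le> R" using weight_ge[OF mem] weighted by linarith
        ultimately show ?thesis using B mem by fastforce
      qed
    qed
    then show ?thesis by (intro exI[of _ "max 1 B"]) force
  qed
  have S_small: "\<exists>\<rho>>0. \<forall>r h w. (r, h, w) \<in> ?S \<and> r \<le> \<rho> \<longrightarrow> w \<le> \<epsilon>" if "0 < \<epsilon>" for \<epsilon>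
  proof -
    define N where "N = nat \<lceil>1 / \<epsilon>\<rceil>"
    obtain \<eta>' where "0 < \<eta>'" and \<eta>': "\<forall>t0 n h w. (t0, n, h, w) \<in> S \<and> n \<le> \<eta>' \<and> t0 \<le> real N \<longrightarrow> w \<le> \<epsilon>"
      using small[OF \<open>0 < \<epsilon>\<close>] by blast
    have "w \<le> \<epsilon>" if mem: "(t0, n, h, w) \<in> S" and weighted: "\<beta> t0 * n \<le> min 1 \<eta>'" for t0 n h w
    proof -
      have "\<beta> t0 * n \<le> real N + 1" using weighted by linarith
      then consider "w \<le> 1 / (real N + 1)" | "t0 \<le> real N" using dichotomy[OF mem] by blast
      then show ?thesis
      proof cases
        case 1
        moreover have "1 / \<epsilon> \<le> real N" unfolding N_def by linarith
        ultimately show ?thesis using inverse_le[OF \<open>0 < \<epsilon>\<close>, of N] by linarith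
      next
        case 2
        moreover have "n \<le> \<eta>'" using weight_ge[OF mem] weighted by linarith
        ultimately show ?thesis using \<eta>' mem by blast
      qed
    qed
    then show ?thesis using \<open>0 < \<eta>'\<close> by (intro exI[of _ "min 1 \<eta>'"]) force
  qed
  have S_decay: "\<exists>\<tau>. \<forall>r h w. (r, h, w) \<in> ?S \<and> r \<le> R \<and> \<tau> \<le> h \<longrightarrow> w \<le> \<epsilon>" if "0 < \<epsilon>" for \<epsilon> R
  proof -
    define N where "N = nat \<lceil>max (1 / \<epsilon>) R\<rceil>"
    obtain \<tau> where \<tau>: "\<forall>t0 n h w. (t0, n, h, w) \<in> S \<and> n \<le> R \<and> t0 \<le> real N \<and> \<tau> \<le> h \<longrightarrow> w \<le> \<epsilon>"
      using decay[OF \<open>0 < \<epsilon>\<close>] by blast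
    have "w \<le> \<epsilon>" if mem: "(t0, n, h, w) \<in> S" and weighted: "\<beta> t0 * n \<le> R" and "\<tau> \<le> h" for t0 n h w
    proof -
      have "\<beta> t0 * n \<le> real N + 1" using weighted unfolding N_def by linarith
      then consider "w \<le> 1 / (real N + 1)" | "t0 \<le> real N" using dichotomy[OF mem] by blast
      then show ?thesis
      proof cases
        case 1
        moreover have "1 / \<epsilon> \<le> real N" unfolding N_def by linarith
        ultimately show ?thesis using inverse_le[OF \<open>0 < \<epsilon>\<close>, of N] by linarith
      next
        case 2
        moreover have "n \<le> R" using weight_ge[OF mem] weighted by linarith
        ultimately show ?thesis using \<tau> mem \<open>\<tau> \<le> h\<close> by blast
      qed
    qed
    then show ?thesis by (intro exI[of _ \<tau>]) force
  qed
  obtain \<sigma> where "classKL \<sigma>" and \<sigma>: "\<And>r h w. (r, h, w) \<in> ?S \<Longrightarrow> w \<le> \<sigma> r h"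
    using classKL_majorant[of ?S] S_nonneg S_bounded S_small S_decay by blast
  have "w \<le> \<sigma> (\<beta> t0 * n) h" if "(t0, n, h, w) \<in> S" for t0 n h w
    using \<sigma> that by force
  with \<open>classKL \<sigma>\<close> \<open>classKplus \<beta>\<close> show ?thesis by (rule that)
qed

lemma KL_estimate_from_uniform_bounds:
  fixes MU :: "(real \<Rightarrow> 'u::real_normed_vector) set" and MD :: "(real \<Rightarrow> 'd) set"
    and \<phi> :: "real \<Rightarrow> real \<Rightarrow> 'x::real_normed_vector \<Rightarrow> (real \<Rightarrow> 'u) \<Rightarrow> (real \<Rightarrow> 'd) \<Rightarrow> 'x"
    and A\<phi> :: "(real \<times> real \<times> 'x \<times> (real \<Rightarrow> 'u) \<times> (real \<Rightarrow> 'd)) set"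
    and V :: "real \<Rightarrow> 'x \<Rightarrow> 'u \<Rightarrow> real" and \<gamma> \<delta> :: "real \<Rightarrow> real"
  assumes P1: "\<forall>s\<ge>0. \<forall>T\<ge>0. bdd_above
       {V t (\<phi> t t0 x0 u d) (u t) - (SUP \<tau>\<in>{t0..t}. \<gamma> (\<delta> \<tau> * norm (u \<tau>))) | t t0 x0 u d.
          t \<ge> t0 \<and> norm x0 \<le> s \<and> t0 \<in> {0..T} \<and> d \<in> MD \<and> u \<in> MU \<and> (t,t0,x0,u,d) \<in> A\<phi>}"
    and P2: "\<forall>\<epsilon>>0. \<forall>T\<ge>0. \<exists>\<eta>>0. \<forall>t t0 x0 u d.
          t \<ge> t0 \<and> norm x0 \<le> \<eta> \<and> t0 \<in> {0..T} \<and> d \<in> MD \<and> u \<in> MU \<and> (t,t0,x0,u,d) \<in> A\<phi>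
          \<longrightarrow> V t (\<phi> t t0 x0 u d) (u t) - (SUP \<tau>\<in>{t0..t}. \<gamma> (\<delta> \<tau> * norm (u \<tau>))) \<le> \<epsilon>"
    and P3: "\<forall>\<epsilon>>0. \<forall>T\<ge>0. \<forall>R\<ge>0. \<exists>\<tau>\<^sub>0\<ge>0. \<forall>t t0 x0 u d.
          t \<ge> t0 + \<tau>\<^sub>0 \<and> norm x0 \<le> R \<and> t0 \<in> {0..T} \<and> d \<in> MD \<and> u \<in> MU \<and> (t,t0,x0,u,d) \<in> A\<phi>
          \<longrightarrow> V t (\<phi> t t0 x0 u d) (u t) - (SUP \<tau>\<in>{t0..t}. \<gamma> (\<delta> \<tau> * norm (u \<tau>))) \<le> \<epsilon>"
  shows "\<exists>\<sigma> \<beta>. classKL \<sigma> \<and> classKplus \<beta> \<and>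
           (\<forall>u\<in>MU. \<forall>t0\<ge>0. \<forall>x0. \<forall>d\<in>MD. \<forall>t\<ge>t0. (t,t0,x0,u,d) \<in> A\<phi> \<longrightarrow>
              V t (\<phi> t t0 x0 u d) (u t)
                \<le> \<sigma> (\<beta> t0 * norm x0) (t - t0) + (SUP \<tau>\<in>{t0..t}. \<gamma> (\<delta> \<tau> * norm (u \<tau>))))"
proof -
  define W where "W t t0 x0 u d = V t (\<phi> t t0 x0 u d) (u t) - (SUP \<tau>\<in>{t0..t}. \<gamma> (\<delta> \<tau> * norm (u \<tau>)))"
    for t t0 x0 u d
  define S where "S = {(t0, norm x0, t - t0, W t t0 x0 u d) | t t0 x0 u d.
    0 \<le> t0 \<and> t0 \<le> t \<and> d \<in> MD \<and> u \<in> MU \<and> (t, t0, x0, u, d) \<in> A\<phi>}"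
  have S_cases: "\<exists>t x0 u d. n = norm x0 \<and> h = t - t0 \<and> w = W t t0 x0 u d
      \<and> 0 \<le> t0 \<and> t0 \<le> t \<and> d \<in> MD \<and> u \<in> MU \<and> (t, t0, x0, u, d) \<in> A\<phi>"
    if "(t0, n, h, w) \<in> S" for t0 n h w
    using that unfolding S_def by blast
  have nonneg: "0 \<le> n" if "(t0, n, h, w) \<in> S" for t0 n h w
    using S_cases[OF that] by auto
  have bounded: "\<exists>B. \<forall>t0 n h w. (t0, n, h, w) \<in> S \<and> n \<le> N \<and> t0 \<le> T \<longrightarrow> w \<le> B" for N T
  proof -
    let ?A = "{W t t0 x0 u d | t t0 x0 u d. t \<ge> t0 \<and> norm x0 \<le> \<bar>N\<bar> \<and> t0 \<in> {0..\<bar>T\<bar>}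
      \<and> d \<in> MD \<and> u \<in> MU \<and> (t, t0, x0, u, d) \<in> A\<phi>}"
    have "bdd_above ?A"
      using P1[rule_format, of "\<bar>N\<bar>" "\<bar>T\<bar>"] unfolding W_def by simp
    then obtain B where B: "\<And>y. y \<in> ?A \<Longrightarrow> y \<le> B"
      unfolding bdd_above_def by blast
    have "w \<le> B" if mem: "(t0, n, h, w) \<in> S" and "n \<le> N" "t0 \<le> T" for t0 n h w
    proof -
      obtain t x0 u d where "n = norm x0" "w = W t t0 x0 u d" "0 \<le> t0" "t0 \<le> t" "d \<in> MD" "u \<in> MU"
        "(t, t0, x0, u, d) \<in> A\<phi>"
        using S_cases[OF mem] by blast
      with \<open>n \<le> N\<close> \<open>t0 \<le> T\<close> have "w \<in> ?A" by fastforce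
      then show ?thesis by (rule B)
    qed
    then show ?thesis by blast
  qed
  have small: "\<exists>\<eta>>0. \<forall>t0 n h w. (t0, n, h, w) \<in> S \<and> n \<le> \<eta> \<and> t0 \<le> T \<longrightarrow> w \<le> \<epsilon>"
    if "0 < \<epsilon>" for \<epsilon> T
  proof -
    obtain \<eta> where "0 < \<eta>" and \<eta>: "\<forall>t t0 x0 u d. t \<ge> t0 \<and> norm x0 \<le> \<eta> \<and> t0 \<in> {0..\<bar>T\<bar>}
        \<and> d \<in> MD \<and> u \<in> MU \<and> (t, t0, x0, u, d) \<in> A\<phi> \<longrightarrow> W t t0 x0 u d \<le> \<epsilon>"
      using P2[rule_format, of \<epsilon> "\<bar>T\<bar>"] \<open>0 < \<epsilon>\<close> unfolding W_def by auto
    have "w \<le> \<epsilon>" if mem: "(t0, n, h, w) \<in> S" and "n \<le> \<eta>" "t0 \<le> T" for t0 n h w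
    proof -
      obtain t x0 u d where "n = norm x0" "w = W t t0 x0 u d" "0 \<le> t0" "t0 \<le> t" "d \<in> MD" "u \<in> MU"
        "(t, t0, x0, u, d) \<in> A\<phi>"
        using S_cases[OF mem] by blast
      with \<open>n \<le> \<eta>\<close> \<open>t0 \<le> T\<close> show ?thesis
        using \<eta> abs_ge_self[of T] by auto
    qed
    with \<open>0 < \<eta>\<close> show ?thesis by blast
  qed
  have decay: "\<exists>\<tau>. \<forall>t0 n h w. (t0, n, h, w) \<in> S \<and> n \<le> N \<and> t0 \<le> T \<and> \<tau> \<le> h \<longrightarrow> w \<le> \<epsilon>"
    if "0 < \<epsilon>" for \<epsilon> N T
  proof -
    obtain \<tau> where \<tau>: "\<forall>t t0 x0 u d. t \<ge> t0 + \<tau> \<and> norm x0 \<le> \<bar>N\<bar> \<and> t0 \<in> {0..\<bar>T\<bar>}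
        \<and> d \<in> MD \<and> u \<in> MU \<and> (t, t0, x0, u, d) \<in> A\<phi> \<longrightarrow> W t t0 x0 u d \<le> \<epsilon>"
      using P3[rule_format, of \<epsilon> "\<bar>T\<bar>" "\<bar>N\<bar>"] \<open>0 < \<epsilon>\<close> unfolding W_def by auto
    have "w \<le> \<epsilon>" if mem: "(t0, n, h, w) \<in> S" and "n \<le> N" "t0 \<le> T" "\<tau> \<le> h" for t0 n h w
    proof -
      obtain t x0 u d where "n = norm x0" "h = t - t0" "w = W t t0 x0 u d" "0 \<le> t0" "t0 \<le> t"
        "d \<in> MD" "u \<in> MU" "(t, t0, x0, u, d) \<in> A\<phi>"
        using S_cases[OF mem] by blast
      with \<open>n \<le> N\<close> \<open>t0 \<le> T\<close> \<open>\<tau> \<le> h\<close> show ?thesis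
        using \<tau> abs_ge_self[of N] abs_ge_self[of T] by auto
    qed
    then show ?thesis by blast
  qed
  obtain \<sigma> \<beta> where "classKL \<sigma>" "classKplus \<beta>"
    and \<sigma>: "\<And>t0 n h w. (t0, n, h, w) \<in> S \<Longrightarrow> w \<le> \<sigma> (\<beta> t0 * n) h"
    using weighted_classKL_majorant[of S] nonneg bounded small decay by blast
  have "V t (\<phi> t t0 x0 u d) (u t)
      \<le> \<sigma> (\<beta> t0 * norm x0) (t - t0) + (SUP \<tau>\<in>{t0..t}. \<gamma> (\<delta> \<tau> * norm (u \<tau>)))"
    if "u \<in> MU" "0 \<le> t0" "d \<in> MD" "t0 \<le> t" "(t, t0, x0, u, d) \<in> A\<phi>" for u t0 x0 d t
  proof -
    have "(t0, norm x0, t - t0, W t t0 x0 u d) \<in> S"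
      unfolding S_def using that by blast
    then show ?thesis using \<sigma> unfolding W_def by fastforce
  qed
  with \<open>classKL \<sigma>\<close> \<open>classKplus \<beta>\<close> show ?thesis by blast
qed

section \<open>The output estimate\<close>

lemma classKinf_inverse_majorant:
  assumes "classKinf \<rho>"
  obtains \<kappa> where "classK \<kappa>" "\<And>g p. 0 \<le> g \<Longrightarrow> \<rho> g < p \<Longrightarrow> g \<le> \<kappa> p"
proof -
  have "classK \<rho>" and unbounded: "\<not> bdd_above (\<rho> ` {0..})"
    using assms by (auto simp: classKinf_def)
  then have strict: "strict_mono_on {0..} \<rho>" by (simp add: classK_def)
  let ?S = "{(p, g). 0 \<le> g \<and> \<rho> g < p}"
  have "0 \<le> p" if "(p, g) \<in> ?S" for p g
    using that classK_nonneg[OF \<open>classK \<rho>\<close>] by fastforce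
  moreover have "\<exists>B. \<forall>p g. (p, g) \<in> ?S \<and> p \<le> R \<longrightarrow> g \<le> B" for R
  proof -
    obtain B where "0 \<le> B" "R < \<rho> B"
      using unbounded by (auto simp: bdd_above_def not_le)
    then have "g \<le> B" if "0 \<le> g" "\<rho> g < p" "p \<le> R" for p g
      using that strict_mono_on_less[OF strict, of g B] by auto
    then show ?thesis by blast
  qed
  moreover have "\<exists>\<eta>>0. \<forall>p g. (p, g) \<in> ?S \<and> p \<le> \<eta> \<longrightarrow> g \<le> \<epsilon>" if "0 < \<epsilon>" for \<epsilon>
  proof (intro exI conjI)
    show "0 < \<rho> \<epsilon>" using \<open>classK \<rho>\<close> that by (simp add: classK_def)
    show "\<forall>p g. (p, g) \<in> ?S \<and> p \<le> \<rho> \<epsilon> \<longrightarrow> g \<le> \<epsilon>"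
    proof (intro allI impI)
      fix p g assume "(p, g) \<in> ?S \<and> p \<le> \<rho> \<epsilon>"
      then have "0 \<le> g" "\<rho> g < \<rho> \<epsilon>" by auto
      then show "g \<le> \<epsilon>" using strict_mono_on_less[OF strict, of g \<epsilon>] that by auto
    qed
  qed
  ultimately obtain \<kappa> where "classK \<kappa>" and \<kappa>: "\<And>p g. (p, g) \<in> ?S \<Longrightarrow> g \<le> \<kappa> p"
    using classK_majorant[of ?S] by blast
  have "g \<le> \<kappa> p" if "0 \<le> g" "\<rho> g < p" for g p
    using \<kappa> that by blast
  with \<open>classK \<kappa>\<close> show ?thesis by (rule that)
qed

lemma classN_weak_triangle:
  assumes a: "classN a" and "classK \<kappa>" "classN \<rho>"
    and \<kappa>: "\<And>g p. 0 \<le> g \<Longrightarrow> \<rho> g < p \<Longrightarrow> g \<le> \<kappa> p"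
    and "0 \<le> p" "0 \<le> g"
  shows "a (p + g) \<le> a (p + \<kappa> p) + a (g + \<rho> g)"
proof -
  have "0 \<le> a (p + \<kappa> p)" "0 \<le> a (g + \<rho> g)"
    using assms classK_nonneg classN_nonneg by (metis add_nonneg_nonneg)+
  moreover have "a (p + g) \<le> a (p + \<kappa> p) \<or> a (p + g) \<le> a (g + \<rho> g)"
  proof (cases "p \<le> \<rho> g")
    case True
    then show ?thesis using assms by (intro disjI2 classN_mono[OF a]) auto
  next
    case False
    then show ?thesis using assms by (intro disjI1 classN_mono[OF a]) auto
  qed
  ultimately show ?thesis by linarith
qed

lemma classN_SUP_commute:
  assumes f: "classN f" and "A \<noteq> {}" "bdd_above (g ` A)" and g: "\<And>x. x \<in> A \<Longrightarrow> 0 \<le> g x"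
  shows "f (SUP x\<in>A. g x) = (SUP x\<in>A. f (g x))"
proof -
  define f' where "f' y = f (max 0 y)" for y
  have "mono f'"
    unfolding f'_def by (rule monoI) (simp add: classN_mono[OF f])
  have "continuous_on UNIV f'"
    unfolding f'_def
  proof (rule continuous_on_compose2[of "{0..}" f])
    show "continuous_on {0..} f" using f by (simp add: classN_def)
    show "continuous_on UNIV (\<lambda>y. max 0 y :: real)" by (intro continuous_intros)
  qed auto
  then have "continuous (at_left (SUP x\<in>A. g x)) f'"
    by (simp add: continuous_on_eq_continuous_at continuous_at_imp_continuous_at_within)
  then have "f' (SUP x\<in>A. g x) = (SUP y\<in>g ` A. f' y)"
    using continuous_at_Sup_mono[OF \<open>mono f'\<close>] assms(2,3) by simp
  moreover obtain x where "x \<in> A" using \<open>A \<noteq> {}\<close> by blast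
  then have "0 \<le> (SUP x\<in>A. g x)"
    using g \<open>bdd_above (g ` A)\<close> by (meson cSUP_upper order_trans)
  ultimately show ?thesis
    using g by (simp add: f'_def image_image)
qed

lemma bdd_above_weighted_norm:
  fixes u :: "real \<Rightarrow> 'u::real_normed_vector"
  assumes "classN \<gamma>" "classKplus \<delta>" "bounded (u ` {t0..t})" "0 \<le> t0"
  shows "bdd_above ((\<lambda>\<tau>. \<gamma> (\<delta> \<tau> * norm (u \<tau>))) ` {t0..t})"
proof -
  obtain M where M: "\<And>\<tau>. \<tau> \<in> {t0..t} \<Longrightarrow> norm (u \<tau>) \<le> M"
    using assms(3) unfolding bounded_iff by blast
  have "continuous_on {t0..t} \<delta>"
    using assms(2,4) by (auto simp: classKplus_def intro: continuous_on_subset)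
  then have "bounded (\<delta> ` {t0..t})" by (intro compact_imp_bounded compact_continuous_image) auto
  then obtain K where K: "\<forall>x\<in>\<delta> ` {t0..t}. norm x \<le> K"
    unfolding bounded_iff by blast
  have "\<gamma> (\<delta> \<tau> * norm (u \<tau>)) \<le> \<gamma> (K * M)" if "\<tau> \<in> {t0..t}" for \<tau>
  proof (rule classN_mono[OF assms(1)])
    have "0 \<le> \<delta> \<tau>" using assms(2,4) that by (auto simp: classKplus_def less_imp_le)
    then show "0 \<le> \<delta> \<tau> * norm (u \<tau>)" by simp
    have "norm (\<delta> \<tau>) \<le> K" using K that by blast
    then have "\<delta> \<tau> \<le> K" "0 \<le> K"
      using abs_ge_self[of "\<delta> \<tau>"] abs_ge_zero[of "\<delta> \<tau>"] unfolding real_norm_def by linarith+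
    with M[OF that] show "\<delta> \<tau> * norm (u \<tau>) \<le> K * M" by (intro mult_mono) auto
  qed
  then show ?thesis by (intro bdd_aboveI2)
qed

lemma WIOS_from_KL_estimate:
  fixes U :: "'u::real_normed_vector set" and MU :: "(real \<Rightarrow> 'u) set"
    and D :: "'d set" and MD :: "(real \<Rightarrow> 'd) set"
    and \<phi> :: "real \<Rightarrow> real \<Rightarrow> 'x::real_normed_vector \<Rightarrow> (real \<Rightarrow> 'u) \<Rightarrow> (real \<Rightarrow> 'd) \<Rightarrow> 'x"
    and A\<phi> :: "(real \<times> real \<times> 'x \<times> (real \<Rightarrow> 'u) \<times> (real \<Rightarrow> 'd)) set"
    and \<pi> :: "real \<Rightarrow> 'x \<Rightarrow> (real \<Rightarrow> 'u) \<Rightarrow> (real \<Rightarrow> 'd) \<Rightarrow> real set"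
    and H :: "real \<Rightarrow> 'x \<Rightarrow> 'u \<Rightarrow> 'y::real_normed_vector"
    and V :: "real \<Rightarrow> 'x \<Rightarrow> 'u \<Rightarrow> real"
  assumes sys: "control_system U MU D MD \<phi> A\<phi> \<pi> H"
    and "BIC MU MD \<phi> A\<phi>" "robust_equilibrium MU MD \<phi> A\<phi> H" "RFC U MU MD \<phi> A\<phi>"
    and V_nonneg: "\<forall>t\<ge>0. \<forall>x. \<forall>v\<in>U. V t x v \<ge> 0"
    and \<gamma>: "classN \<gamma>" and \<delta>: "classKplus \<delta>" and \<sigma>: "classKL \<sigma>" and "classKplus \<beta>"
    and estimate: "\<forall>u\<in>MU. \<forall>t0\<ge>0. \<forall>x0. \<forall>d\<in>MD. \<forall>t\<ge>t0. (t,t0,x0,u,d) \<in> A\<phi> \<longrightarrow>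
               V t (\<phi> t t0 x0 u d) (u t)
                 \<le> \<sigma> (\<beta> t0 * norm x0) (t - t0) + (SUP \<tau>\<in>{t0..t}. \<gamma> (\<delta> \<tau> * norm (u \<tau>)))"
    and a: "classN a" and H_le: "\<forall>t\<ge>0. \<forall>x. \<forall>v\<in>U. norm (H t x v) \<le> a (V t x v)"
    and \<rho>: "classKinf \<rho>"
  shows "WIOS U MU MD \<phi> A\<phi> H (\<lambda>s. a (\<gamma> s + \<rho> (\<gamma> s))) \<delta>"
proof -
  obtain \<kappa> where "classK \<kappa>" and \<kappa>: "\<And>g p. 0 \<le> g \<Longrightarrow> \<rho> g < p \<Longrightarrow> g \<le> \<kappa> p"
    using classKinf_inverse_majorant[OF \<rho>] by blast
  have "classN \<rho>" using \<rho> by (simp add: classKinf_def classK_imp_classN)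
  define F where "F p = a (p + \<kappa> p)" for p
  have "classN F"
    unfolding F_def
    using classN_comp[OF a classN_add[OF classN_id classK_imp_classN[OF \<open>classK \<kappa>\<close>]]] .
  have gain: "classN (\<lambda>y. a (y + \<rho> y))"
    using classN_comp[OF a classN_add[OF classN_id \<open>classN \<rho>\<close>]] .
  have "classKL (\<lambda>s t. F (\<sigma> s t) + \<sigma> s t)"
    using \<sigma> \<open>classN F\<close> by (rule classKL_add_comp)
  moreover have "norm (H t (\<phi> t t0 x0 u d) (u t))
      \<le> F (\<sigma> (\<beta> t0 * norm x0) (t - t0)) + \<sigma> (\<beta> t0 * norm x0) (t - t0)
        + (SUP \<tau>\<in>{t0..t}. a (\<gamma> (\<delta> \<tau> * norm (u \<tau>)) + \<rho> (\<gamma> (\<delta> \<tau> * norm (u \<tau>)))))"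
    if "u \<in> MU" "0 \<le> t0" "d \<in> MD" "t0 \<le> t" "(t, t0, x0, u, d) \<in> A\<phi>" for u t0 x0 d t
  proof -
    have "u \<in> locbdd_fun U" using sys \<open>u \<in> MU\<close> by (auto simp: control_system_def)
    then have "u t \<in> U" and "bounded (u ` {0..t})"
      using that by (auto simp: locbdd_fun_def)
    have "bounded (u ` {t0..t})"
      using \<open>bounded (u ` {0..t})\<close> by (rule bounded_subset) (use \<open>0 \<le> t0\<close> in auto)
    define p where "p = \<sigma> (\<beta> t0 * norm x0) (t - t0)"
    define g where "g = (SUP \<tau>\<in>{t0..t}. \<gamma> (\<delta> \<tau> * norm (u \<tau>)))"
    have arg_nonneg: "0 \<le> \<delta> \<tau> * norm (u \<tau>)" if "\<tau> \<in> {t0..t}" for \<tau>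
      using \<delta> that \<open>0 \<le> t0\<close> by (auto simp: classKplus_def less_imp_le)
    have bdd: "bdd_above ((\<lambda>\<tau>. \<gamma> (\<delta> \<tau> * norm (u \<tau>))) ` {t0..t})"
      using \<gamma> \<delta> \<open>bounded (u ` {t0..t})\<close> \<open>0 \<le> t0\<close> by (rule bdd_above_weighted_norm)
    have "0 \<le> p"
      unfolding p_def using \<open>classKplus \<beta>\<close> \<open>0 \<le> t0\<close> \<open>t0 \<le> t\<close>
      by (intro classKL_nonneg[OF \<sigma>]) (auto simp: classKplus_def less_imp_le)
    have "0 \<le> g"
      unfolding g_def using \<open>t0 \<le> t\<close> bdd classN_nonneg[OF \<gamma> arg_nonneg]
      by (meson atLeastAtMost_iff cSUP_upper order.trans order_refl)
    have "0 \<le> V t (\<phi> t t0 x0 u d) (u t)"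
      using V_nonneg \<open>u t \<in> U\<close> \<open>0 \<le> t0\<close> \<open>t0 \<le> t\<close> by auto
    then have "norm (H t (\<phi> t t0 x0 u d) (u t)) \<le> a (p + g)"
      using H_le estimate that \<open>u t \<in> U\<close> \<open>0 \<le> p\<close> \<open>0 \<le> g\<close> unfolding p_def g_def
      by (meson classN_mono[OF a] order_trans)
    also have "\<dots> \<le> F p + a (g + \<rho> g)"
      unfolding F_def using a \<open>classK \<kappa>\<close> \<open>classN \<rho>\<close> \<kappa> \<open>0 \<le> p\<close> \<open>0 \<le> g\<close> by (rule classN_weak_triangle)
    also have "a (g + \<rho> g) = (SUP \<tau>\<in>{t0..t}. a (\<gamma> (\<delta> \<tau> * norm (u \<tau>)) + \<rho> (\<gamma> (\<delta> \<tau> * norm (u \<tau>)))))"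
      unfolding g_def using gain bdd classN_nonneg[OF \<gamma> arg_nonneg] \<open>t0 \<le> t\<close>
      by (intro classN_SUP_commute) auto
    finally show ?thesis using \<open>0 \<le> p\<close> unfolding p_def by linarith
  qed
  ultimately show ?thesis
    unfolding WIOS_def using assms classN_comp[OF gain \<gamma>] \<open>classKplus \<beta>\<close> by blast
qed

theorem lemma2p16:
  fixes U :: "'u::real_normed_vector set" and MU :: "(real \<Rightarrow> 'u) set"
    and D :: "'d set" and MD :: "(real \<Rightarrow> 'd) set"
    and \<phi> :: "real \<Rightarrow> real \<Rightarrow> 'x::real_normed_vector \<Rightarrow> (real \<Rightarrow> 'u) \<Rightarrow> (real \<Rightarrow> 'd) \<Rightarrow> 'x"
    and A\<phi> :: "(real \<times> real \<times> 'x \<times> (real \<Rightarrow> 'u) \<times> (real \<Rightarrow> 'd)) set"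
    and \<pi> :: "real \<Rightarrow> 'x \<Rightarrow> (real \<Rightarrow> 'u) \<Rightarrow> (real \<Rightarrow> 'd) \<Rightarrow> real set"
    and H :: "real \<Rightarrow> 'x \<Rightarrow> 'u \<Rightarrow> 'y::real_normed_vector"
    and V :: "real \<Rightarrow> 'x \<Rightarrow> 'u \<Rightarrow> real"
    and \<gamma> \<delta> :: "real \<Rightarrow> real"
  assumes sys: "control_system U MU D MD \<phi> A\<phi> \<pi> H"
    and bic: "BIC MU MD \<phi> A\<phi>"
    and req: "robust_equilibrium MU MD \<phi> A\<phi> H"
    and rfc: "RFC U MU MD \<phi> A\<phi>"
    and V_nonneg: "\<forall>t\<ge>0. \<forall>x. \<forall>v\<in>U. V t x v \<ge> 0"
    and V_zero: "\<forall>t\<ge>0. V t 0 0 = 0"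
    and gamma: "classN \<gamma>" and delta: "classKplus \<delta>"
    and P1: "\<forall>s\<ge>0. \<forall>T\<ge>0. bdd_above
       {V t (\<phi> t t0 x0 u d) (u t) - (SUP \<tau>\<in>{t0..t}. \<gamma> (\<delta> \<tau> * norm (u \<tau>))) | t t0 x0 u d.
          t \<ge> t0 \<and> norm x0 \<le> s \<and> t0 \<in> {0..T} \<and> d \<in> MD \<and> u \<in> MU \<and> (t,t0,x0,u,d) \<in> A\<phi>}"
    and P2: "\<forall>\<epsilon>>0. \<forall>T\<ge>0. \<exists>\<eta>>0. \<forall>t t0 x0 u d.
          t \<ge> t0 \<and> norm x0 \<le> \<eta> \<and> t0 \<in> {0..T} \<and> d \<in> MD \<and> u \<in> MU \<and> (t,t0,x0,u,d) \<in> A\<phi>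
          \<longrightarrow> V t (\<phi> t t0 x0 u d) (u t) - (SUP \<tau>\<in>{t0..t}. \<gamma> (\<delta> \<tau> * norm (u \<tau>))) \<le> \<epsilon>"
    and P3: "\<forall>\<epsilon>>0. \<forall>T\<ge>0. \<forall>R\<ge>0. \<exists>\<tau>\<^sub>0\<ge>0. \<forall>t t0 x0 u d.
          t \<ge> t0 + \<tau>\<^sub>0 \<and> norm x0 \<le> R \<and> t0 \<in> {0..T} \<and> d \<in> MD \<and> u \<in> MU \<and> (t,t0,x0,u,d) \<in> A\<phi>
          \<longrightarrow> V t (\<phi> t t0 x0 u d) (u t) - (SUP \<tau>\<in>{t0..t}. \<gamma> (\<delta> \<tau> * norm (u \<tau>))) \<le> \<epsilon>"
  shows "(\<exists>\<sigma> \<beta>. classKL \<sigma> \<and> classKplus \<beta> \<and>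
            (\<forall>u\<in>MU. \<forall>t0\<ge>0. \<forall>x0. \<forall>d\<in>MD. \<forall>t\<ge>t0. (t,t0,x0,u,d) \<in> A\<phi> \<longrightarrow>
               V t (\<phi> t t0 x0 u d) (u t)
                 \<le> \<sigma> (\<beta> t0 * norm x0) (t - t0) + (SUP \<tau>\<in>{t0..t}. \<gamma> (\<delta> \<tau> * norm (u \<tau>)))))
       \<and> (\<forall>a. classN a \<and> (\<forall>t\<ge>0. \<forall>x. \<forall>v\<in>U. norm (H t x v) \<le> a (V t x v)) \<longrightarrow>
            (\<forall>\<rho>. classKinf \<rho> \<longrightarrow>
               WIOS U MU MD \<phi> A\<phi> H (\<lambda>s. a (\<gamma> s + \<rho> (\<gamma> s))) \<delta>))"
proof -
  obtain \<sigma> \<beta> where "classKL \<sigma>" "classKplus \<beta>" and estimate: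
    "\<forall>u\<in>MU. \<forall>t0\<ge>0. \<forall>x0. \<forall>d\<in>MD. \<forall>t\<ge>t0. (t,t0,x0,u,d) \<in> A\<phi> \<longrightarrow>
       V t (\<phi> t t0 x0 u d) (u t)
         \<le> \<sigma> (\<beta> t0 * norm x0) (t - t0) + (SUP \<tau>\<in>{t0..t}. \<gamma> (\<delta> \<tau> * norm (u \<tau>)))"
    using KL_estimate_from_uniform_bounds[OF P1 P2 P3] by blast
  moreover have "WIOS U MU MD \<phi> A\<phi> H (\<lambda>s. a (\<gamma> s + \<rho> (\<gamma> s))) \<delta>"
    if "classN a" "\<forall>t\<ge>0. \<forall>x. \<forall>v\<in>U. norm (H t x v) \<le> a (V t x v)" "classKinf \<rho>" for a \<rho>
    using WIOS_from_KL_estimate[OF sys bic req rfc V_nonneg gamma delta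
        \<open>classKL \<sigma>\<close> \<open>classKplus \<beta>\<close> estimate that] .
  ultimately show ?thesis by blast
qed

end
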